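(* Let $\mathbb{K}\in\{\mathbb{R},\mathbb{C}\}$ and $\mathcal{A}=(A_1,\ldots,A_d)$ positive semidefinite matrices in $\mathbb{K}^{n\times n}$. Then $$\mathrm{OptSOS}_d(\mathcal{A})\le\mathrm{OptSOS}_1(\mathcal{A})=\mathrm{OptSDP}(\mathcal{A}).$$
   Context: $\langle x,y\rangle=x^\dagger y$ with $\dagger$ the (conjugate) transpose, $\|x\|^2=\langle x,x\rangle$, $\langle A,X\rangle=\operatorname{Tr}(A^\dagger X)$. $\mathrm{OptSDP}(\mathcal{A})=\max\big\{\big(\prod_{i=1}^d\langle A_i,X\rangle\big)^{1/d}: X\text{ symmetric/Hermitian},\ X\succeq0,\ \operatorname{Tr}X=1\big\}$. A real polynomial $f$ is written $f\succeq0$ if it is a sum of squares of real polynomials; when $\mathbb{K}=\mathbb{C}$, polynomials in $x$ are regarded as real polynomials in $\operatorname{Re}x,\operatorname{Im}x$. With $\mathcal{S}_k$ the set of $k$-element subsets of $\{1,\ldots,d\}$, $\mathrm{OptSOS}_k(\mathcal{A})=\inf\{\lambda^{1/k}:\ \lambda\ge0,\ \alpha_I>0\ (I\in\mathcal{S}_k),\ \prod_{I\in\mathcal{S}_k}\alpha_I\ge1,\ \lambda\|x\|^{2k}-\binom dk^{-1}\sum_{I\in\mathcal{S}_k}\alpha_I\prod_{i\in I}\langle x,A_ix\rangle\succeq0\}$. *)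

theory Defs
  imports Complex_Main
begin

text \<open>The field K is represented as a subset of the complex numbers: either the reals
  (K = \<real>) or all complex numbers (K = UNIV). Vectors in K^n are functions
  nat => complex whose first n entries lie in K; n x n matrices are functions
  nat => nat => complex (only entries with indices < n matter).
  The matrices A_1..A_d are indexed A 0, ..., A (d-1).\<close>

definition Kvec :: "complex set \<Rightarrow> nat \<Rightarrow> (nat \<Rightarrow> complex) set" where
  "Kvec K n = {x. \<forall>j<n. x j \<in> K}"

definition Kmat :: "complex set \<Rightarrow> nat \<Rightarrow> (nat \<Rightarrow> nat \<Rightarrow> complex) \<Rightarrow> bool" where
  "Kmat K n M \<longleftrightarrow> (\<forall>i<n. \<forall>j<n. M i j \<in> K)"

definition qform :: "nat \<Rightarrow> (nat \<Rightarrow> nat \<Rightarrow> complex) \<Rightarrow> (nat \<Rightarrow> complex) \<Rightarrow> complex" where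
  "qform n M x = (\<Sum>i<n. \<Sum>j<n. cnj (x i) * M i j * x j)"

definition vnorm2 :: "nat \<Rightarrow> (nat \<Rightarrow> complex) \<Rightarrow> real" where
  "vnorm2 n x = (\<Sum>j<n. (cmod (x j))^2)"

definition hermitian :: "nat \<Rightarrow> (nat \<Rightarrow> nat \<Rightarrow> complex) \<Rightarrow> bool" where
  "hermitian n M \<longleftrightarrow> (\<forall>i<n. \<forall>j<n. M j i = cnj (M i j))"

definition psd :: "complex set \<Rightarrow> nat \<Rightarrow> (nat \<Rightarrow> nat \<Rightarrow> complex) \<Rightarrow> bool" where
  "psd K n M \<longleftrightarrow> Kmat K n M \<and> hermitian n M \<and> (\<forall>x\<in>Kvec K n. 0 \<le> Re (qform n M x))"

definition frob :: "nat \<Rightarrow> (nat \<Rightarrow> nat \<Rightarrow> complex) \<Rightarrow> (nat \<Rightarrow> nat \<Rightarrow> complex) \<Rightarrow> complex" where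
  "frob n A X = (\<Sum>i<n. \<Sum>j<n. cnj (A j i) * X j i)"

definition mtrace :: "nat \<Rightarrow> (nat \<Rightarrow> nat \<Rightarrow> complex) \<Rightarrow> complex" where
  "mtrace n X = (\<Sum>i<n. X i i)"

definition OptSDP :: "complex set \<Rightarrow> nat \<Rightarrow> nat \<Rightarrow> (nat \<Rightarrow> nat \<Rightarrow> nat \<Rightarrow> complex) \<Rightarrow> real" where
  "OptSDP K n d A = Sup {root d (\<Prod>i<d. Re (frob n (A i) X)) | X. psd K n X \<and> mtrace n X = 1}"

text \<open>Real polynomials in the real variables Re x_j, Im x_j (j < n), as functions of x.
  (For K = R the variables Im x_j vanish on K^n.)\<close>
inductive realpoly :: "nat \<Rightarrow> ((nat \<Rightarrow> complex) \<Rightarrow> real) \<Rightarrow> bool" for n where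
  const: "realpoly n (\<lambda>x. c)"
| re: "j < n \<Longrightarrow> realpoly n (\<lambda>x. Re (x j))"
| im: "j < n \<Longrightarrow> realpoly n (\<lambda>x. Im (x j))"
| add: "realpoly n p \<Longrightarrow> realpoly n q \<Longrightarrow> realpoly n (\<lambda>x. p x + q x)"
| mult: "realpoly n p \<Longrightarrow> realpoly n q \<Longrightarrow> realpoly n (\<lambda>x. p x * q x)"

text \<open>f is a sum of squares of real polynomials (identity as functions on K^n,
  which for real polynomials is the same as polynomial identity).\<close>
definition sos :: "complex set \<Rightarrow> nat \<Rightarrow> ((nat \<Rightarrow> complex) \<Rightarrow> real) \<Rightarrow> bool" where
  "sos K n f \<longleftrightarrow> (\<exists>ps. (\<forall>p\<in>set ps. realpoly n p) \<and>
      (\<forall>x\<in>Kvec K n. f x = (\<Sum>p\<leftarrow>ps. (p x)^2)))"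

definition subsetsK :: "nat \<Rightarrow> nat \<Rightarrow> nat set set" where
  "subsetsK d k = {I. I \<subseteq> {..<d} \<and> card I = k}"

definition OptSOS :: "complex set \<Rightarrow> nat \<Rightarrow> nat \<Rightarrow> (nat \<Rightarrow> nat \<Rightarrow> nat \<Rightarrow> complex) \<Rightarrow> nat \<Rightarrow> real" where
  "OptSOS K n d A k = Inf {root k lam | lam \<alpha>. lam \<ge> 0 \<and>
      (\<forall>I\<in>subsetsK d k. \<alpha> I > 0) \<and> (\<Prod>I\<in>subsetsK d k. \<alpha> I) \<ge> 1 \<and>
      sos K n (\<lambda>x. lam * vnorm2 n x ^ k - (1 / real (d choose k)) *
         (\<Sum>I\<in>subsetsK d k. \<alpha> I * (\<Prod>i\<in>I. Re (qform n (A i) x))))}"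

end

theory Submission
  imports Defs "HOL-Analysis.Analysis"
begin

text \<open>The equality \<open>OptSOS\<^sub>1 = OptSDP\<close> is strong duality for a semidefinite program. A nonnegative
  order-1 certificate \<open>\<lambda>\<parallel>x\<parallel>\<^sup>2 - d\<^sup>-\<^sup>1 \<Sum> \<alpha>\<^sub>i \<langle>x, A\<^sub>i x\<rangle>\<close> says that \<open>\<lambda>I - d\<^sup>-\<^sup>1 \<Sum> \<alpha>\<^sub>i A\<^sub>i\<close> is positive
  semidefinite, hence (by a Gram factorisation) a sum of squares; pairing it with a feasible \<open>X\<close> and
  applying AM-GM gives weak duality. Conversely, by compactness the SDP has a maximiser \<open>X\<close>, and
  perturbing \<open>X\<close> towards rank-one matrices \<open>v v\<^sup>\<dagger>\<close> yields the first-order condition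
  \<open>\<Sum> \<langle>v, A\<^sub>i v\<rangle> / \<langle>A\<^sub>i, X\<rangle> \<le> d\<close>, i.e. a certificate of value \<open>OptSDP\<close> with weights
  \<open>\<alpha>\<^sub>i = OptSDP / \<langle>A\<^sub>i, X\<rangle>\<close> (when some \<open>A\<^sub>i\<close> vanishes one only gets certificates of arbitrarily small
  value, which suffices). Finally every order-1 certificate is raised to an order-\<open>d\<close> certificate
  of the same value, using Hurwitz's sum-of-squares proof of AM-GM.\<close>

section \<open>Scalars\<close>

abbreviation real_or_complex :: "complex set \<Rightarrow> bool" where
  "real_or_complex K \<equiv> K = \<real> \<or> K = UNIV"

lemma scalar_add: "real_or_complex K \<Longrightarrow> a \<in> K \<Longrightarrow> b \<in> K \<Longrightarrow> a + b \<in> K"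
  by (auto simp: complex_is_Real_iff)
lemma scalar_diff: "real_or_complex K \<Longrightarrow> a \<in> K \<Longrightarrow> b \<in> K \<Longrightarrow> a - b \<in> K"
  by (auto simp: complex_is_Real_iff)
lemma scalar_mult: "real_or_complex K \<Longrightarrow> a \<in> K \<Longrightarrow> b \<in> K \<Longrightarrow> a * b \<in> K"
  by (auto simp: complex_is_Real_iff)
lemma scalar_divide: "real_or_complex K \<Longrightarrow> a \<in> K \<Longrightarrow> b \<in> K \<Longrightarrow> a / b \<in> K"
  by (auto simp: complex_is_Real_iff Im_divide)
lemma scalar_uminus: "real_or_complex K \<Longrightarrow> a \<in> K \<Longrightarrow> - a \<in> K"
  by (auto simp: complex_is_Real_iff)
lemma scalar_cnj: "real_or_complex K \<Longrightarrow> a \<in> K \<Longrightarrow> cnj a \<in> K"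
  by (auto simp: complex_is_Real_iff)
lemma scalar_of_real: "real_or_complex K \<Longrightarrow> complex_of_real r \<in> K"
  by auto
lemma scalar_sum: "real_or_complex K \<Longrightarrow> (\<And>i. i \<in> I \<Longrightarrow> f i \<in> K) \<Longrightarrow> sum f I \<in> K"
  by (induction I rule: infinite_finite_induct) (auto intro: scalar_add)

lemma Kvec_unit: "real_or_complex K \<Longrightarrow> (\<lambda>j. if j = i then 1 else 0) \<in> Kvec K n"
  unfolding Kvec_def by auto

section \<open>Sums of squares\<close>

lemma realpoly_uminus: "realpoly n p \<Longrightarrow> realpoly n (\<lambda>x. - p x)"
  using realpoly.mult[OF realpoly.const[of n "-1"]] by simp

lemma realpoly_diff: "realpoly n p \<Longrightarrow> realpoly n q \<Longrightarrow> realpoly n (\<lambda>x. p x - q x)"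
  using realpoly.add[OF _ realpoly_uminus] by simp

lemma realpoly_scale: "realpoly n p \<Longrightarrow> realpoly n (\<lambda>x. c * p x)"
  using realpoly.mult[OF realpoly.const] by simp

lemma realpoly_sum: "(\<And>i. i \<in> I \<Longrightarrow> realpoly n (f i)) \<Longrightarrow> realpoly n (\<lambda>x. \<Sum>i\<in>I. f i x)"
proof (induction I rule: infinite_finite_induct)
  case (insert a A)
  then show ?case using realpoly.add[of n "f a" "\<lambda>x. \<Sum>i\<in>A. f i x"] by simp
qed (simp_all add: realpoly.const)

lemma realpoly_sum_squares: "(\<And>p. p \<in> set ps \<Longrightarrow> realpoly n p) \<Longrightarrow> realpoly n (\<lambda>x. \<Sum>p\<leftarrow>ps. (p x)^2)"
proof (induction ps)
  case (Cons a ps)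
  then show ?case using realpoly.add[OF realpoly.mult[of n a a]] by (simp add: power2_eq_square)
qed (simp add: realpoly.const)

lemma realpoly_Re_linear: "realpoly n (\<lambda>x. Re (\<Sum>j<n. c j * x j))"
  by (simp add: Re_sum) (intro realpoly_sum realpoly_diff realpoly_scale realpoly.re realpoly.im; simp)

lemma realpoly_Im_linear: "realpoly n (\<lambda>x. Im (\<Sum>j<n. c j * x j))"
  by (simp add: Im_sum) (intro realpoly_sum realpoly.add realpoly_scale realpoly.re realpoly.im; simp)

lemma sos_nonneg: "sos K n f \<Longrightarrow> x \<in> Kvec K n \<Longrightarrow> 0 \<le> f x"
  unfolding sos_def by (auto intro!: sum_list_nonneg)

lemma sos_cong: "sos K n f \<Longrightarrow> (\<And>x. x \<in> Kvec K n \<Longrightarrow> g x = f x) \<Longrightarrow> sos K n g"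
  unfolding sos_def by metis

lemma sos_imp_realpoly: "sos K n f \<Longrightarrow> \<exists>p. realpoly n p \<and> (\<forall>x\<in>Kvec K n. f x = p x)"
  unfolding sos_def using realpoly_sum_squares by blast

lemma sos_square: "realpoly n p \<Longrightarrow> sos K n (\<lambda>x. (p x)^2)"
  unfolding sos_def by (intro exI[of _ "[p]"]) auto

lemma sos_const: "0 \<le> c \<Longrightarrow> sos K n (\<lambda>x. c)"
  using sos_square[OF realpoly.const[of n "sqrt c"], of K] by simp

lemma sos_add: "sos K n f \<Longrightarrow> sos K n g \<Longrightarrow> sos K n (\<lambda>x. f x + g x)"
  unfolding sos_def
proof (elim exE conjE)
  fix ps qs assume "\<forall>p\<in>set ps. realpoly n p" "\<forall>x\<in>Kvec K n. f x = (\<Sum>p\<leftarrow>ps. (p x)\<^sup>2)"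
    "\<forall>p\<in>set qs. realpoly n p" "\<forall>x\<in>Kvec K n. g x = (\<Sum>p\<leftarrow>qs. (p x)\<^sup>2)"
  then show "\<exists>rs. (\<forall>p\<in>set rs. realpoly n p) \<and> (\<forall>x\<in>Kvec K n. f x + g x = (\<Sum>p\<leftarrow>rs. (p x)\<^sup>2))"
    by (intro exI[of _ "ps @ qs"]) auto
qed

lemma sum_list_squares_mult:
  fixes ps qs :: "('a \<Rightarrow> real) list"
  shows "(\<Sum>p\<leftarrow>ps. (p x)^2) * (\<Sum>q\<leftarrow>qs. (q x)^2) =
    (\<Sum>r\<leftarrow>concat (map (\<lambda>p. map (\<lambda>q x. p x * q x) qs) ps). (r x)^2)"
proof (induction ps)
  case (Cons a ps)
  have "(\<Sum>r\<leftarrow>map (\<lambda>q x. a x * q x) qs. (r x)^2) = (a x)^2 * (\<Sum>q\<leftarrow>qs. (q x)^2)"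
    by (induction qs) (auto simp: algebra_simps power_mult_distrib)
  then show ?case using Cons by (simp add: algebra_simps)
qed simp

lemma sos_mult: "sos K n f \<Longrightarrow> sos K n g \<Longrightarrow> sos K n (\<lambda>x. f x * g x)"
  unfolding sos_def
proof (elim exE conjE)
  fix ps qs assume "\<forall>p\<in>set ps. realpoly n p" "\<forall>x\<in>Kvec K n. f x = (\<Sum>p\<leftarrow>ps. (p x)\<^sup>2)"
    "\<forall>p\<in>set qs. realpoly n p" "\<forall>x\<in>Kvec K n. g x = (\<Sum>p\<leftarrow>qs. (p x)\<^sup>2)"
  then show "\<exists>rs. (\<forall>p\<in>set rs. realpoly n p) \<and> (\<forall>x\<in>Kvec K n. f x * g x = (\<Sum>p\<leftarrow>rs. (p x)\<^sup>2))"
    by (intro exI[of _ "concat (map (\<lambda>p. map (\<lambda>q x. p x * q x) qs) ps)"])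
       (auto simp: sum_list_squares_mult intro: realpoly.mult)
qed

lemma sos_scale: "0 \<le> c \<Longrightarrow> sos K n f \<Longrightarrow> sos K n (\<lambda>x. c * f x)"
  using sos_mult[OF sos_const] by blast

lemma sos_square_diff: "sos K n f \<Longrightarrow> sos K n g \<Longrightarrow> sos K n (\<lambda>x. (f x - g x)^2)"
proof -
  assume "sos K n f" "sos K n g"
  then obtain p q where "realpoly n p" "\<forall>x\<in>Kvec K n. f x = p x" "realpoly n q" "\<forall>x\<in>Kvec K n. g x = q x"
    using sos_imp_realpoly by metis
  then show ?thesis using sos_square[OF realpoly_diff, of n p q K] by (auto intro: sos_cong)
qed

lemma sos_sum: "(\<And>i. i \<in> I \<Longrightarrow> sos K n (f i)) \<Longrightarrow> sos K n (\<lambda>x. \<Sum>i\<in>I. f i x)"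
proof (induction I rule: infinite_finite_induct)
  case (insert a A)
  then show ?case using sos_add[of K n "f a" "\<lambda>x. \<Sum>i\<in>A. f i x"] by simp
qed (simp_all add: sos_const)

lemma sos_prod: "(\<And>i. i \<in> I \<Longrightarrow> sos K n (f i)) \<Longrightarrow> sos K n (\<lambda>x. \<Prod>i\<in>I. f i x)"
proof (induction I rule: infinite_finite_induct)
  case (insert a A)
  then show ?case using sos_mult[of K n "f a" "\<lambda>x. \<Prod>i\<in>A. f i x"] by simp
qed (simp_all add: sos_const)

lemma sos_power: "sos K n f \<Longrightarrow> sos K n (\<lambda>x. f x ^ m)"
  using sos_prod[of "{..<m}" K n "\<lambda>_. f"] by simp

lemma sos_power_diff:
  assumes "sos K n f" "sos K n g" "sos K n (\<lambda>x. f x - g x)"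
  shows "sos K n (\<lambda>x. f x ^ m - g x ^ m)"
proof (rule sos_cong)
  show "sos K n (\<lambda>x. (f x - g x) * (\<Sum>i<m. g x ^ (m - Suc i) * f x ^ i))"
    by (intro sos_mult sos_sum sos_power assms)
qed (rule power_diff_sumr2)

section \<open>The AM-GM inequality as a sum of squares\<close>

lemma power_diff_telescope:
  fixes z u :: real
  assumes "k \<le> m + 1"
  shows "z^k * u^(m+1-k) - u^(m+1) = (z - u) * (\<Sum>j<k. z^j * u^(m-j))"
  using assms
proof (induction k)
  case (Suc k)
  have "u^(m+1-k) = u * u^(m - k)" using Suc.prems by (simp add: Suc_diff_le)
  then have "z^(Suc k) * u^(m+1-Suc k) - u^(m+1) = z^k * u^(m-k) * (z - u) + (z^k * u^(m+1-k) - u^(m+1))"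
    by (simp add: algebra_simps)
  also have "\<dots> = (z - u) * (\<Sum>j<Suc k. z^j * u^(m-j))"
    using Suc by (simp add: algebra_simps)
  finally show ?case .
qed simp

lemma power_diff_telescope2:
  fixes z u :: real
  assumes "k \<le> m + 2"
  shows "z^k * u^(m+2-k) - z * u^(m+1) =
    (z - u)^2 * (\<Sum>i<k. \<Sum>j<i. z^j * u^(m-j)) + (real k - 1) * (z - u) * u^(m+1)"
  using assms
proof (induction k)
  case (Suc k)
  have k: "k \<le> m + 1" using Suc.prems by simp
  have "u^(m+2-k) = u * u^(m+1 - k)" using Suc.prems by (simp add: Suc_diff_le)
  then have "z^(Suc k) * u^(m+2-Suc k) - z*u^(m+1) =
      (z^k * u^(m+2-k) - z*u^(m+1)) + (z - u) * (z^k * u^(m+1-k))"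
    by (simp add: algebra_simps)
  also have "z^k * u^(m+1-k) = (z-u) * (\<Sum>j<k. z^j * u^(m-j)) + u^(m+1)"
    using power_diff_telescope[OF k, of z u] by simp
  finally show ?case using Suc k by (simp add: algebra_simps power2_eq_square)
qed (simp add: algebra_simps)

text \<open>The two-variable case of AM-GM with weights \<open>m + 1\<close> and \<open>1\<close>: the difference of the two
  sides is \<open>(z - u)\<^sup>2\<close> times a polynomial with nonnegative coefficients in \<open>z\<close> and \<open>u\<close>.\<close>

lemma weighted_amgm_identity:
  fixes z u :: real
  shows "(real (m+1) * u + z)^(m+2) - real (m+2)^(m+2) * z * u^(m+1)
    = (z - u)^2 * (\<Sum>k\<le>m+2. (real (m+2 choose k) * real (m+1)^(m+2-k)) * (\<Sum>i<k. \<Sum>j<i. z^j * u^(m-j)))"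
proof -
  define N where "N = m + 2"
  define a where "a k = real (N choose k) * real (m+1)^(N-k)" for k
  have binomial: "(real (m+1) * u + z)^N = (\<Sum>k\<le>N. a k * (z^k * u^(N-k)))"
    unfolding binomial_ring[of z "real (m+1) * u" N, simplified add.commute[of z]] a_def
    by (intro sum.cong refl) (simp add: power_mult_distrib[symmetric] mult.commute)
  have sum_a: "(\<Sum>k\<le>N. a k) = real N ^ N"
    using binomial_ring[of 1 "real (m+1)" N] unfolding a_def N_def by (simp add: add.commute)
  have sum_ka: "(\<Sum>k\<le>N. real k * a k) = real N ^ N"
  proof -
    have "(\<Sum>k\<le>N. real k * a k) = (\<Sum>k\<le>N. (of_nat k * of_nat (N choose k)) * 1^(k-1) * real (m+1)^(N-k))"
      unfolding a_def by (simp add: algebra_simps)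
    also have "\<dots> = real N * (1 + real (m+1))^(N-1)" by (rule binomial_deriv1)
    also have "\<dots> = real N ^ N" unfolding N_def by simp
    finally show ?thesis .
  qed
  have "(real (m+1) * u + z)^N - real N^N * z * u^(m+1) = (\<Sum>k\<le>N. a k * (z^k * u^(N-k) - z * u^(m+1)))"
  proof -
    have "(\<Sum>k\<le>N. a k * (z * u^(m+1))) = real N^N * z * u^(m+1)"
      using sum_a by (simp add: sum_distrib_right[symmetric])
    then show ?thesis using binomial by (simp add: sum_subtractf right_diff_distrib)
  qed
  also have "\<dots> = (\<Sum>k\<le>N. a k * ((z-u)^2 * (\<Sum>i<k. \<Sum>j<i. z^j * u^(m-j)) + (real k - 1)*(z-u)*u^(m+1)))"
    by (rule sum.cong[OF refl], subst power_diff_telescope2[symmetric]) (auto simp: N_def)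
  also have "\<dots> = (z-u)^2 * (\<Sum>k\<le>N. a k * (\<Sum>i<k. \<Sum>j<i. z^j * u^(m-j)))
      + (z-u)*u^(m+1) * ((\<Sum>k\<le>N. real k * a k) - (\<Sum>k\<le>N. a k))"
    by (simp add: sum.distrib sum_distrib_left sum_subtractf algebra_simps)
  also have "\<dots> = (z-u)^2 * (\<Sum>k\<le>N. a k * (\<Sum>i<k. \<Sum>j<i. z^j * u^(m-j)))"
    using sum_a sum_ka by simp
  finally show ?thesis unfolding N_def a_def by simp
qed

lemma sos_weighted_amgm:
  assumes "0 < d" "sos K n u" "sos K n z"
  shows "sos K n (\<lambda>x. (real d * u x + z x)^(d+1) - real (d+1)^(d+1) * z x * u x^d)"
proof -
  obtain m where m: "d = m + 1" using \<open>0 < d\<close> by (metis Suc_eq_plus1 gr0_implies_Suc)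
  have "sos K n (\<lambda>x. (z x - u x)^2 * (\<Sum>k\<le>m+2. (real (m+2 choose k) * real (m+1)^(m+2-k))
      * (\<Sum>i<k. \<Sum>j<i. z x^j * u x^(m-j))))"
    by (intro sos_mult sos_square_diff sos_sum sos_scale sos_power assms) simp
  then show ?thesis
    by (rule sos_cong) (simp only: m weighted_amgm_identity add.assoc one_add_one)
qed

lemma amgm_induction_identity:
  fixes S z P :: real
  assumes "0 < d"
  shows "(S + z)^(d+1) - real (d+1)^(d+1) * (P * z) =
    ((real d * (S / real d) + z)^(d+1) - real (d+1)^(d+1) * z * (S / real d)^d)
    + (real (d+1)^(d+1) / real d^d) * (z * (S^d - real d^d * P))"
proof -
  have split: "T - c * (P * z) = (T - c * z * (Q / D)) + c / D * (z * (Q - D * P))"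
    if "D \<noteq> 0" for T c Q D :: real
    using that by (simp add: field_simps)
  have "real d * (S / real d) = S" "(S / real d)^d = S^d / real d^d"
    using assms by (simp_all add: power_divide)
  then show ?thesis using assms by (simp only:) (rule split, simp)
qed

text \<open>Hurwitz's argument: peel off one variable at a time with the weighted two-variable case.\<close>

lemma sos_amgm:
  assumes "\<And>i. i < d \<Longrightarrow> sos K n (y i)"
  shows "sos K n (\<lambda>x. (\<Sum>i<d. y i x)^d - real d^d * (\<Prod>i<d. y i x))"
  using assms
proof (induction d)
  case (Suc d)
  show ?case
  proof (cases "d = 0")
    case False
    define S where "S x = (\<Sum>i<d. y i x)" for x
    have S: "sos K n S" unfolding S_def using Suc.prems by (intro sos_sum) auto
    have "sos K n (\<lambda>x. (real d * (S x / real d) + y d x)^(d+1)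
        - real (d+1)^(d+1) * y d x * (S x / real d)^d)"
      using Suc.prems S False by (intro sos_weighted_amgm) (auto intro: sos_scale[of "1 / real d", simplified])
    moreover have "sos K n (\<lambda>x. (real (d+1)^(d+1) / real d^d)
        * (y d x * (S x^d - real d^d * (\<Prod>i<d. y i x))))"
      using Suc.IH Suc.prems unfolding S_def by (intro sos_scale sos_mult) auto
    ultimately have "sos K n (\<lambda>x. (S x + y d x)^(d+1) - real (d+1)^(d+1) * ((\<Prod>i<d. y i x) * y d x))"
      using False by (simp only: amgm_induction_identity[of d] neq0_conv) (rule sos_add)
    then show ?thesis unfolding S_def sum.lessThan_Suc prod.lessThan_Suc unfolding Suc_eq_plus1 .
  qed (simp add: sos_const)
qed (simp add: sos_const)

section \<open>Positive semidefinite matrices\<close>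

lemma sum_delta_mult_left:
  "finite I \<Longrightarrow> i \<in> I \<Longrightarrow> (\<Sum>j\<in>I. (if j = i then c else 0) * f j) = (c * f i :: 'a::semiring_0)"
  by (simp add: if_distrib[of "\<lambda>a. a * _"] cong: if_cong)

lemma sum_delta_mult_right:
  "finite I \<Longrightarrow> i \<in> I \<Longrightarrow> (\<Sum>j\<in>I. f j * (if j = i then c else 0)) = (f i * c :: 'a::semiring_0)"
  by (simp add: if_distrib[of "times _"] cong: if_cong)

lemma sum_swap3:
  "(\<Sum>i\<in>A. \<Sum>j\<in>B. \<Sum>k\<in>C. f i j k) = (\<Sum>k\<in>C. \<Sum>i\<in>A. \<Sum>j\<in>B. (f i j k :: 'a::comm_monoid_add))"
  by (subst sum.swap) (rule sum.cong[OF refl], rule sum.swap)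

lemma hermitianD: "hermitian n M \<Longrightarrow> i < n \<Longrightarrow> j < n \<Longrightarrow> M j i = cnj (M i j)"
  unfolding hermitian_def by blast

lemma hermitian_diag_real: "hermitian n M \<Longrightarrow> i < n \<Longrightarrow> M i i = complex_of_real (Re (M i i))"
  unfolding hermitian_def by (metis complex_cnj_cancel_iff complex_is_Real_iff Reals_cnj_iff of_real_Re)

lemma qform_cong:
  "(\<And>i. i < n \<Longrightarrow> x i = y i) \<Longrightarrow> (\<And>i j. i < n \<Longrightarrow> j < n \<Longrightarrow> M i j = N i j) \<Longrightarrow> qform n M x = qform n N y"
  unfolding qform_def by (intro sum.cong refl) auto

lemma qform_Suc: "qform (Suc n) M y = qform n M y + (\<Sum>i<n. cnj (y i) * M i n) * y n
   + cnj (y n) * (\<Sum>j<n. M n j * y j) + cnj (y n) * M n n * y n"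
  unfolding qform_def by (simp add: sum.distrib sum_distrib_left sum_distrib_right algebra_simps)

lemma qform_unit: "i < n \<Longrightarrow> qform n M (\<lambda>j. if j = i then 1 else 0) = M i i"
  unfolding qform_def
  by (simp add: if_distrib[of cnj] sum_delta_mult_left sum_delta_mult_right cong: if_cong)

lemma qform_scale: "qform n M (\<lambda>j. c * x j) = (cnj c * c) * qform n M x"
  unfolding qform_def by (simp add: sum_distrib_left algebra_simps)

lemma qform_minus_outer:
  "qform n (\<lambda>i j. M i j - cnj (w i) * w j) x = qform n M x - cnj (\<Sum>j<n. w j * x j) * (\<Sum>j<n. w j * x j)"
  unfolding qform_def by (simp add: algebra_simps sum_subtractf sum_distrib_left sum_distrib_right)

lemma Re_cnj_mult_self: "Re (cnj z * z) = (Re z)^2 + (Im z)^2"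
  by (simp add: power2_eq_square)

lemma psd_diag_nonneg:
  assumes "real_or_complex K" "psd K n M" "i < n"
  shows "0 \<le> Re (M i i)"
  using assms Kvec_unit[OF assms(1), of i n] qform_unit[of i n M] unfolding psd_def by metis

lemma psd_restrict:
  assumes K: "real_or_complex K" and P: "psd K (Suc n) M"
  shows "psd K n M"
  unfolding psd_def
proof (intro conjI ballI)
  show "Kmat K n M" using P unfolding psd_def Kmat_def by auto
  show "hermitian n M" using P unfolding psd_def hermitian_def by (meson less_SucI)
  fix x assume x: "x \<in> Kvec K n"
  define y where "y = x(n := 0)"
  have y: "y \<in> Kvec K (Suc n)" using x K unfolding y_def Kvec_def by (auto simp: less_Suc_eq)
  have "qform (Suc n) M y = qform n M x"
    unfolding qform_Suc by (simp add: y_def qform_def)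
  then show "0 \<le> Re (qform n M x)" using P y unfolding psd_def by metis
qed

lemma qform_Suc_two_entries:
  assumes "j < n"
  shows "qform (Suc n) M (\<lambda>i. if i = j then 1 else if i = n then s else 0)
    = M j j + M j n * s + cnj s * M n j + cnj s * M n n * s"
proof -
  let ?x = "\<lambda>i. if i = j then 1 else if i = n then s else 0"
  have "qform n M ?x = qform n M (\<lambda>i. if i = j then 1 else 0)"
    by (rule qform_cong) auto
  moreover have "(\<Sum>i<n. cnj (?x i) * M i n) = (\<Sum>i<n. (if i = j then 1 else 0) * M i n)"
    "(\<Sum>i<n. M n i * ?x i) = (\<Sum>i<n. M n i * (if i = j then 1 else 0))"
    by (auto intro: sum.cong)
  ultimately show ?thesis
    using assms by (simp add: qform_Suc qform_unit sum_delta_mult_left sum_delta_mult_right)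
qed

text \<open>A vanishing diagonal entry forces its row to vanish: otherwise the test vector
  \<open>e\<^sub>j - r c e\<^sub>n\<close> with \<open>c = M n j\<close> and \<open>r\<close> large makes the form negative.\<close>

lemma psd_zero_diag_row:
  assumes K: "real_or_complex K" and P: "psd K (Suc n) M" and z: "M n n = 0" and j: "j < n"
  shows "M n j = 0"
proof (rule ccontr)
  define c where "c = M n j"
  assume "M n j \<noteq> 0"
  then have cpos: "cmod c > 0" unfolding c_def by simp
  have "M j n = cnj c" using P j unfolding psd_def hermitian_def c_def by (metis less_Suc_eq lessI)
  have cK: "c \<in> K" using P j unfolding psd_def Kmat_def c_def by auto
  define r where "r = (\<bar>Re (M j j)\<bar> + 1) / (2 * (cmod c)^2)"
  define s where "s = - complex_of_real r * c"
  have "s \<in> K" unfolding s_def using K cK by (intro scalar_mult scalar_uminus scalar_of_real) auto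
  then have "(\<lambda>i. if i = j then 1 else if i = n then s else 0) \<in> Kvec K (Suc n)"
    using K unfolding Kvec_def by auto
  then have "0 \<le> Re (qform (Suc n) M (\<lambda>i. if i = j then 1 else if i = n then s else 0))"
    using P unfolding psd_def by blast
  then have ge: "0 \<le> Re (M j j + cnj c * s + cnj s * c)"
    by (simp only: qform_Suc_two_entries[OF j] z \<open>M j n = cnj c\<close> c_def[symmetric]) simp
  have "cnj c * c = complex_of_real ((cmod c)^2)"
    using complex_norm_square[of c] by (simp add: mult.commute)
  then have "M j j + cnj c * s + cnj s * c = M j j - complex_of_real (2 * r * (cmod c)^2)"
    unfolding s_def by (simp add: algebra_simps)
  then have "Re (M j j + cnj c * s + cnj s * c) = Re (M j j) - 2 * r * (cmod c)^2"
    by (simp only: minus_complex.sel Re_complex_of_real)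
  also have "2 * r * (cmod c)^2 = \<bar>Re (M j j)\<bar> + 1" unfolding r_def using cpos by simp
  finally show False using ge by linarith
qed

lemma hermitian_minus_outer:
  "hermitian n M \<Longrightarrow> hermitian n (\<lambda>i j. M i j - cnj (w i) * w j)"
  unfolding hermitian_def by (metis complex_cnj_cnj complex_cnj_diff complex_cnj_mult mult.commute)

lemma psd_schur_complement:
  assumes K: "real_or_complex K" and P: "psd K (Suc n) M" and a: "Re (M n n) > 0"
  defines "w \<equiv> \<lambda>j. M n j / complex_of_real (sqrt (Re (M n n)))"
  shows "psd K n (\<lambda>i j. M i j - cnj (w i) * w j)"
  unfolding psd_def
proof (intro conjI ballI)
  have H: "hermitian (Suc n) M" and KM: "Kmat K (Suc n) M" using P unfolding psd_def by auto
  define r where "r = Re (M n n)"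
  have Mnn: "M n n = complex_of_real r" unfolding r_def using hermitian_diag_real[OF H] by simp
  have wK: "w j \<in> K" if "j < Suc n" for j
    unfolding w_def using KM that K unfolding Kmat_def by (intro scalar_divide scalar_of_real) auto
  show "Kmat K n (\<lambda>i j. M i j - cnj (w i) * w j)"
    using KM wK K unfolding Kmat_def by (auto intro!: scalar_diff scalar_mult scalar_cnj)
  show "hermitian n (\<lambda>i j. M i j - cnj (w i) * w j)"
    using psd_restrict[OF K P] unfolding psd_def by (blast intro: hermitian_minus_outer)
  fix x assume x: "x \<in> Kvec K n"
  define \<beta> where "\<beta> = (\<Sum>j<n. M n j * x j)"
  have \<beta>K: "\<beta> \<in> K" unfolding \<beta>_def using x KM K unfolding Kvec_def Kmat_def
    by (intro scalar_sum scalar_mult) auto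
  define y where "y = x(n := - \<beta> / complex_of_real r)"
  have y: "y \<in> Kvec K (Suc n)" using x K \<beta>K unfolding y_def Kvec_def
    by (auto simp: less_Suc_eq intro!: scalar_divide scalar_uminus)
  have "(\<Sum>i<n. cnj (y i) * M i n) = (\<Sum>i<n. cnj (M n i * x i))"
    using hermitianD[OF H, of _ n] by (intro sum.cong refl) (simp add: y_def mult.commute)
  then have s1: "(\<Sum>i<n. cnj (y i) * M i n) = cnj \<beta>" unfolding \<beta>_def by simp
  have s2: "(\<Sum>j<n. M n j * y j) = \<beta>" unfolding \<beta>_def y_def by simp
  have q0: "qform n M y = qform n M x" by (rule qform_cong) (auto simp: y_def)
  have rpos: "r > 0" using a r_def by simp
  have "qform (Suc n) M y = qform n M x - cnj \<beta> * \<beta> / complex_of_real r"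
    unfolding qform_Suc s1 s2 q0 Mnn using rpos by (simp add: y_def field_simps)
  moreover have "qform n (\<lambda>i j. M i j - cnj (w i) * w j) x = qform n M x - cnj \<beta> * \<beta> / complex_of_real r"
  proof -
    have g: "(\<Sum>j<n. w j * x j) = \<beta> / complex_of_real (sqrt r)"
      unfolding w_def \<beta>_def r_def by (simp add: sum_divide_distrib)
    have "(complex_of_real (sqrt r))^2 = complex_of_real r"
      using rpos by (simp flip: of_real_power)
    then show ?thesis unfolding qform_minus_outer g using rpos
      by (simp add: field_simps power2_eq_square[symmetric])
  qed
  ultimately show "0 \<le> Re (qform n (\<lambda>i j. M i j - cnj (w i) * w j) x)"
    using P y unfolding psd_def by metis
qed

definition gram_factor :: "complex set \<Rightarrow> nat \<Rightarrow> (nat \<Rightarrow> nat \<Rightarrow> complex) \<Rightarrow> (nat \<Rightarrow> nat \<Rightarrow> complex) \<Rightarrow> bool" where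
  "gram_factor K n U M \<longleftrightarrow> (\<forall>k<n. \<forall>j<n. U k j \<in> K) \<and> (\<forall>i<n. \<forall>j<n. M i j = (\<Sum>k<n. cnj (U k i) * U k j))"

lemma gram_factor_extend_zero:
  assumes K: "real_or_complex K" and P: "psd K (Suc n) M" and z: "M n n = 0"
    and U: "gram_factor K n U M"
  shows "gram_factor K (Suc n) (\<lambda>k j. if k < n \<and> j < n then U k j else 0) M"
proof -
  have row: "M n j = 0" and col: "M j n = 0" if "j < n" for j
    using psd_zero_diag_row[OF K P z that] hermitianD[of "Suc n" M n j] P that
    unfolding psd_def by auto
  show ?thesis
    unfolding gram_factor_def
  proof (intro conjI allI impI)
    fix i j assume "i < Suc n" "j < Suc n"
    show "M i j = (\<Sum>k<Suc n. cnj (if k < n \<and> i < n then U k i else 0) * (if k < n \<and> j < n then U k j else 0))"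
    proof (cases "i < n \<and> j < n")
      case True
      then show ?thesis using U unfolding gram_factor_def by simp
    next
      case False
      then have "M i j = 0" using \<open>i < Suc n\<close> \<open>j < Suc n\<close> z row col by (auto simp: less_Suc_eq)
      then show ?thesis using False by (auto intro: sum.neutral)
    qed
  qed (use U K in \<open>auto simp: gram_factor_def\<close>)
qed

lemma gram_factor_extend_pivot:
  assumes K: "real_or_complex K" and P: "psd K (Suc n) M" and a: "Re (M n n) > 0"
  defines "w \<equiv> \<lambda>j. M n j / complex_of_real (sqrt (Re (M n n)))"
  assumes U: "gram_factor K n U (\<lambda>i j. M i j - cnj (w i) * w j)"
  shows "gram_factor K (Suc n) (\<lambda>k j. if k < n then if j < n then U k j else 0 else w j) M"
    (is "gram_factor K (Suc n) ?U M")
  unfolding gram_factor_def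
proof (intro conjI allI impI)
  have H: "hermitian (Suc n) M" and KM: "Kmat K (Suc n) M" using P unfolding psd_def by auto
  fix k j assume "k < Suc n" "j < Suc n"
  then show "?U k j \<in> K"
    using U KM K unfolding gram_factor_def Kmat_def w_def by (auto intro!: scalar_divide scalar_of_real)
next
  have H: "hermitian (Suc n) M" using P unfolding psd_def by auto
  define r where "r = Re (M n n)"
  have Mnn: "M n n = complex_of_real r" unfolding r_def using hermitian_diag_real[OF H] by simp
  have sq: "complex_of_real (sqrt r) * complex_of_real (sqrt r) = complex_of_real r"
    and sp: "complex_of_real (sqrt r) \<noteq> 0" using a unfolding r_def by (simp_all flip: of_real_mult)
  fix i j assume i: "i < Suc n" and j: "j < Suc n"
  have split: "(\<Sum>k<Suc n. cnj (?U k i) * ?U k j) = (\<Sum>k<n. cnj (?U k i) * ?U k j) + cnj (w i) * w j"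
    by simp
  show "M i j = (\<Sum>k<Suc n. cnj (?U k i) * ?U k j)"
  proof (cases "i < n \<and> j < n")
    case True
    then show ?thesis using U unfolding split gram_factor_def by (simp add: algebra_simps)
  next
    case False
    have "M i j = cnj (w i) * w j"
    proof (cases "i = n")
      case True
      then show ?thesis using sp sq Mnn by (simp add: w_def r_def[symmetric])
    next
      case False
      then have "i < n" "j = n" using i j \<open>\<not> (i < n \<and> j < n)\<close> by auto
      then show ?thesis using sp sq Mnn hermitianD[OF H, of n i] by (simp add: w_def r_def[symmetric])
    qed
    moreover have "(\<Sum>k<n. cnj (?U k i) * ?U k j) = 0" using False by (auto intro: sum.neutral)
    ultimately show ?thesis unfolding split by simp
  qed
qed

lemma psd_gram_factor:
  assumes K: "real_or_complex K" and P: "psd K n M"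
  shows "\<exists>U. gram_factor K n U M"
  using P
proof (induction n arbitrary: M)
  case 0
  then show ?case by (simp add: gram_factor_def)
next
  case (Suc n M)
  have "0 \<le> Re (M n n)" using psd_diag_nonneg[OF K Suc.prems] by simp
  then consider "Re (M n n) = 0" | "Re (M n n) > 0" by linarith
  then show ?case
  proof cases
    case 1
    then have "M n n = 0"
      using Suc.prems hermitian_diag_real[of "Suc n" M n] unfolding psd_def by auto
    then show ?thesis
      using Suc.IH[OF psd_restrict[OF K Suc.prems]] gram_factor_extend_zero[OF K Suc.prems] by blast
  next
    case 2
    then show ?thesis
      using Suc.IH[OF psd_schur_complement[OF K Suc.prems 2]] gram_factor_extend_pivot[OF K Suc.prems 2]
      by blast
  qed
qed

lemma qform_gram_factor:
  assumes "gram_factor K n U M"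
  shows "qform n M x = (\<Sum>k<n. cnj (\<Sum>j<n. U k j * x j) * (\<Sum>j<n. U k j * x j))"
proof -
  have "qform n M x = (\<Sum>i<n. \<Sum>j<n. \<Sum>k<n. cnj (x i) * (cnj (U k i) * U k j) * x j)"
    using assms unfolding qform_def gram_factor_def by (simp add: sum_distrib_left sum_distrib_right)
  also have "\<dots> = (\<Sum>k<n. \<Sum>i<n. \<Sum>j<n. cnj (U k i * x i) * (U k j * x j))"
    by (subst sum_swap3) (simp add: algebra_simps)
  also have "\<dots> = (\<Sum>k<n. cnj (\<Sum>j<n. U k j * x j) * (\<Sum>j<n. U k j * x j))"
    by (simp only: cnj_sum sum_product)
  finally show ?thesis .
qed

lemma frob_gram_factor:
  assumes H: "hermitian n M" and X: "gram_factor K n U X"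
  shows "frob n M X = (\<Sum>k<n. qform n M (\<lambda>i. cnj (U k i)))"
proof -
  have "frob n M X = (\<Sum>i<n. \<Sum>j<n. \<Sum>k<n. U k i * M i j * cnj (U k j))"
    unfolding frob_def
  proof (intro sum.cong refl)
    fix i j assume "i \<in> {..<n}" "j \<in> {..<n}"
    then show "cnj (M j i) * X j i = (\<Sum>k<n. U k i * M i j * cnj (U k j))"
      using X hermitianD[OF H, of i j] unfolding gram_factor_def
      by (simp add: sum_distrib_left algebra_simps)
  qed
  also have "\<dots> = (\<Sum>k<n. \<Sum>i<n. \<Sum>j<n. U k i * M i j * cnj (U k j))" by (rule sum_swap3)
  also have "\<dots> = (\<Sum>k<n. qform n M (\<lambda>i. cnj (U k i)))" unfolding qform_def by simp
  finally show ?thesis .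
qed

lemma psd_sos:
  assumes "real_or_complex K" "psd K n M"
  shows "sos K n (\<lambda>x. Re (qform n M x))"
proof -
  obtain U where U: "gram_factor K n U M" using psd_gram_factor[OF assms] by blast
  have "sos K n (\<lambda>x. \<Sum>k<n. (Re (\<Sum>j<n. U k j * x j))^2 + (Im (\<Sum>j<n. U k j * x j))^2)"
    by (intro sos_sum sos_add sos_square realpoly_Re_linear realpoly_Im_linear)
  then show ?thesis
    by (rule sos_cong) (simp only: qform_gram_factor[OF U] Re_sum Re_cnj_mult_self)
qed

lemma psd_frob_nonneg:
  assumes K: "real_or_complex K" and M: "psd K n M" and X: "psd K n X"
  shows "0 \<le> Re (frob n M X)"
proof -
  obtain U where U: "gram_factor K n U X" using psd_gram_factor[OF K X] by blast
  have "\<forall>k<n. (\<lambda>i. cnj (U k i)) \<in> Kvec K n"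
    using U K unfolding gram_factor_def Kvec_def by (auto intro: scalar_cnj)
  then have "\<forall>k<n. 0 \<le> Re (qform n M (\<lambda>i. cnj (U k i)))" using M unfolding psd_def by auto
  moreover have H: "hermitian n M" using M unfolding psd_def by auto
  ultimately show ?thesis unfolding frob_gram_factor[OF H U] Re_sum by (intro sum_nonneg) auto
qed

section \<open>Matrix constructions\<close>

lemma vnorm2_nonneg: "0 \<le> vnorm2 n x"
  unfolding vnorm2_def by (simp add: sum_nonneg)

lemma vnorm2_scale: "vnorm2 n (\<lambda>j. c * x j) = (cmod c)^2 * vnorm2 n x"
  unfolding vnorm2_def by (simp add: norm_mult power_mult_distrib sum_distrib_left)

lemma vnorm2_eq_0_imp_qform_eq_0:
  assumes "vnorm2 n x = 0"
  shows "qform n M x = 0"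
proof -
  have "\<forall>j\<in>{..<n}. (cmod (x j))^2 = 0" using assms unfolding vnorm2_def
    by (subst sum_nonneg_eq_0_iff[symmetric]) auto
  then have "qform n M x = qform n M (\<lambda>_. 0)" by (intro qform_cong) auto
  then show ?thesis by (simp add: qform_def)
qed

lemma sos_vnorm2: "sos K n (vnorm2 n)"
proof -
  have "sos K n (\<lambda>x. \<Sum>j<n. (Re (x j))^2 + (Im (x j))^2)"
    by (intro sos_sum sos_add sos_square realpoly.re realpoly.im) auto
  then show ?thesis by (rule sos_cong) (simp add: vnorm2_def cmod_power2)
qed

lemma Kvec_normalize:
  assumes K: "real_or_complex K" and x: "x \<in> Kvec K n" and N: "0 < vnorm2 n x"
  obtains v where "v \<in> Kvec K n" "vnorm2 n v = 1"
    "\<And>M. qform n M v = complex_of_real (1 / vnorm2 n x) * qform n M x"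
proof
  define c where "c = complex_of_real (1 / sqrt (vnorm2 n x))"
  have cc: "cnj c * c = complex_of_real (1 / vnorm2 n x)" unfolding c_def using N
    by (simp flip: of_real_mult)
  have cm: "(cmod c)^2 = 1 / vnorm2 n x" unfolding c_def using N
    by (simp only: norm_of_real) (simp add: power_divide)
  show "(\<lambda>j. c * x j) \<in> Kvec K n" using x K unfolding Kvec_def c_def by (auto intro: scalar_mult)
  show "vnorm2 n (\<lambda>j. c * x j) = 1" unfolding vnorm2_scale cm using N by simp
  show "qform n M (\<lambda>j. c * x j) = complex_of_real (1 / vnorm2 n x) * qform n M x" for M
    unfolding qform_scale cc ..
qed

lemma Re_qform_le_entry_norms: "Re (qform n M x) \<le> (\<Sum>a<n. \<Sum>b<n. cmod (M a b)) * vnorm2 n x"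
proof -
  have xb: "cmod (x a) * cmod (x b) \<le> vnorm2 n x" if "a < n" "b < n" for a b
  proof -
    have "(cmod (x a))^2 \<le> vnorm2 n x" "(cmod (x b))^2 \<le> vnorm2 n x"
      unfolding vnorm2_def using that by (auto intro!: member_le_sum)
    then show ?thesis using sum_squares_bound[of "cmod (x a)" "cmod (x b)"] by linarith
  qed
  have "Re (qform n M x) \<le> cmod (qform n M x)" by (rule complex_Re_le_cmod)
  also have "\<dots> \<le> (\<Sum>a<n. \<Sum>b<n. cmod (cnj (x a) * M a b * x b))"
    unfolding qform_def by (rule order_trans[OF norm_sum sum_mono]) (rule norm_sum)
  also have "\<dots> \<le> (\<Sum>a<n. \<Sum>b<n. cmod (M a b) * vnorm2 n x)"
  proof (intro sum_mono)
    fix a b assume "a \<in> {..<n}" "b \<in> {..<n}"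
    then have "cmod (x a) * cmod (x b) \<le> vnorm2 n x" using xb by auto
    then show "cmod (cnj (x a) * M a b * x b) \<le> cmod (M a b) * vnorm2 n x"
      by (simp add: norm_mult) (metis mult.commute mult.left_commute mult_left_mono norm_ge_zero)
  qed
  also have "\<dots> = (\<Sum>a<n. \<Sum>b<n. cmod (M a b)) * vnorm2 n x" by (simp add: sum_distrib_right)
  finally show ?thesis .
qed

definition outer :: "(nat \<Rightarrow> complex) \<Rightarrow> nat \<Rightarrow> nat \<Rightarrow> complex" where
  "outer v i j = v i * cnj (v j)"

lemma qform_outer: "qform n (outer v) x = cnj (\<Sum>j<n. cnj (v j) * x j) * (\<Sum>j<n. cnj (v j) * x j)"
  unfolding qform_def outer_def by (simp only: cnj_sum sum_product) (simp add: algebra_simps)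

lemma psd_outer:
  assumes K: "real_or_complex K" and v: "v \<in> Kvec K n"
  shows "psd K n (outer v)"
  unfolding psd_def
proof (intro conjI ballI)
  show "Kmat K n (outer v)"
    using v K unfolding Kmat_def Kvec_def outer_def by (auto intro: scalar_mult scalar_cnj)
  show "hermitian n (outer v)" unfolding hermitian_def outer_def by (simp add: mult.commute)
  show "0 \<le> Re (qform n (outer v) x)" for x unfolding qform_outer Re_cnj_mult_self by simp
qed

lemma mtrace_outer: "mtrace n (outer v) = complex_of_real (vnorm2 n v)"
  unfolding mtrace_def outer_def vnorm2_def by (simp add: complex_norm_square flip: of_real_power)

lemma frob_outer:
  assumes "hermitian n A"
  shows "frob n A (outer v) = qform n A v"
  unfolding frob_def qform_def outer_def
proof (intro sum.cong refl)
  fix i j assume "i \<in> {..<n}" "j \<in> {..<n}"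
  then have "cnj (A j i) = A i j" using hermitianD[OF assms, of i j] by simp
  then show "cnj (A j i) * (v j * cnj (v i)) = cnj (v i) * A i j * v j" by (simp add: algebra_simps)
qed

definition matrix_comb :: "'l set \<Rightarrow> ('l \<Rightarrow> real) \<Rightarrow> ('l \<Rightarrow> nat \<Rightarrow> nat \<Rightarrow> complex) \<Rightarrow> nat \<Rightarrow> nat \<Rightarrow> complex" where
  "matrix_comb I c W i j = (\<Sum>l\<in>I. complex_of_real (c l) * W l i j)"

lemma qform_matrix_comb: "qform n (matrix_comb I c W) x = (\<Sum>l\<in>I. complex_of_real (c l) * qform n (W l) x)"
proof -
  have "qform n (matrix_comb I c W) x = (\<Sum>i<n. \<Sum>j<n. \<Sum>l\<in>I. complex_of_real (c l) * (cnj (x i) * W l i j * x j))"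
    unfolding qform_def matrix_comb_def by (simp add: sum_distrib_left sum_distrib_right algebra_simps)
  also have "\<dots> = (\<Sum>l\<in>I. complex_of_real (c l) * qform n (W l) x)"
    unfolding qform_def by (subst sum_swap3) (simp add: sum_distrib_left)
  finally show ?thesis .
qed

lemma frob_matrix_comb: "frob n A (matrix_comb I c W) = (\<Sum>l\<in>I. complex_of_real (c l) * frob n A (W l))"
proof -
  have "frob n A (matrix_comb I c W) = (\<Sum>i<n. \<Sum>j<n. \<Sum>l\<in>I. complex_of_real (c l) * (cnj (A j i) * W l j i))"
    unfolding frob_def matrix_comb_def by (simp add: sum_distrib_left algebra_simps)
  also have "\<dots> = (\<Sum>l\<in>I. complex_of_real (c l) * frob n A (W l))"
    unfolding frob_def by (subst sum_swap3) (simp add: sum_distrib_left)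
  finally show ?thesis .
qed

lemma mtrace_matrix_comb: "mtrace n (matrix_comb I c W) = (\<Sum>l\<in>I. complex_of_real (c l) * mtrace n (W l))"
  unfolding mtrace_def matrix_comb_def by (subst sum.swap) (simp add: sum_distrib_left)

lemma psd_matrix_comb:
  assumes K: "real_or_complex K" and W: "\<And>l. l \<in> I \<Longrightarrow> psd K n (W l)" and c: "\<And>l. l \<in> I \<Longrightarrow> 0 \<le> c l"
  shows "psd K n (matrix_comb I c W)"
  unfolding psd_def
proof (intro conjI ballI)
  show "Kmat K n (matrix_comb I c W)"
    using W K unfolding Kmat_def matrix_comb_def psd_def by (auto intro!: scalar_sum scalar_mult)
  show "hermitian n (matrix_comb I c W)"
    unfolding hermitian_def matrix_comb_def
  proof (intro allI impI)
    fix i j assume "i < n" "j < n"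
    then have "\<forall>l\<in>I. W l j i = cnj (W l i j)" using W unfolding psd_def hermitian_def by blast
    then show "(\<Sum>l\<in>I. complex_of_real (c l) * W l j i) = cnj (\<Sum>l\<in>I. complex_of_real (c l) * W l i j)"
      by (auto simp: cnj_sum intro!: sum.cong)
  qed
  fix x assume x: "x \<in> Kvec K n"
  have "\<forall>l\<in>I. 0 \<le> Re (qform n (W l) x)" using W x unfolding psd_def by blast
  then show "0 \<le> Re (qform n (matrix_comb I c W) x)" unfolding qform_matrix_comb Re_sum
    using c by (intro sum_nonneg) (simp add: mult_nonneg_nonneg)
qed

definition dual_matrix :: "nat \<Rightarrow> real \<Rightarrow> (nat \<Rightarrow> real) \<Rightarrow> (nat \<Rightarrow> nat \<Rightarrow> nat \<Rightarrow> complex) \<Rightarrow> nat \<Rightarrow> nat \<Rightarrow> complex" where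
  "dual_matrix d V b A i j = (if i = j then complex_of_real V else 0) - (\<Sum>l<d. complex_of_real (b l) * A l i j)"

lemma qform_dual_matrix:
  "qform n (dual_matrix d V b A) x = complex_of_real (V * vnorm2 n x) - (\<Sum>l<d. complex_of_real (b l) * qform n (A l) x)"
proof -
  have "qform n (dual_matrix d V b A) x = (\<Sum>i<n. \<Sum>j<n. cnj (x i) * (if i = j then complex_of_real V else 0) * x j)
      - (\<Sum>i<n. \<Sum>j<n. \<Sum>l<d. cnj (x i) * (complex_of_real (b l) * A l i j) * x j)"
    unfolding qform_def dual_matrix_def by (simp add: algebra_simps sum_subtractf sum_distrib_left sum_distrib_right)
  also have "(\<Sum>i<n. \<Sum>j<n. cnj (x i) * (if i = j then complex_of_real V else 0) * x j) = (\<Sum>i<n. complex_of_real V * (cnj (x i) * x i))"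
    by (intro sum.cong refl) (simp add: if_distrib[of "times _"] if_distrib[of "\<lambda>a. a * _"] algebra_simps cong: if_cong)
  also have "\<dots> = complex_of_real (V * vnorm2 n x)"
    unfolding vnorm2_def by (simp add: sum_distrib_left complex_norm_square mult.commute flip: of_real_power)
  also have "(\<Sum>i<n. \<Sum>j<n. \<Sum>l<d. cnj (x i) * (complex_of_real (b l) * A l i j) * x j) = (\<Sum>l<d. complex_of_real (b l) * qform n (A l) x)"
    unfolding qform_def by (subst sum_swap3) (simp add: sum_distrib_left algebra_simps)
  finally show ?thesis .
qed

lemma frob_dual_matrix:
  "frob n (dual_matrix d V b A) X = complex_of_real V * mtrace n X - (\<Sum>l<d. complex_of_real (b l) * frob n (A l) X)"
proof -
  have "frob n (dual_matrix d V b A) X = (\<Sum>i<n. \<Sum>j<n. (if j = i then complex_of_real V else 0) * X j i)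
      - (\<Sum>i<n. \<Sum>j<n. \<Sum>l<d. complex_of_real (b l) * (cnj (A l j i) * X j i))"
    unfolding frob_def dual_matrix_def
    by (simp add: algebra_simps sum_subtractf sum_distrib_left sum_distrib_right cnj_sum if_distrib[of cnj] cong: if_cong)
  also have "(\<Sum>i<n. \<Sum>j<n. (if j = i then complex_of_real V else 0) * X j i) = (\<Sum>i<n. complex_of_real V * X i i)"
    by (intro sum.cong refl) (simp add: sum_delta_mult_left)
  also have "(\<Sum>i<n. \<Sum>j<n. \<Sum>l<d. complex_of_real (b l) * (cnj (A l j i) * X j i)) = (\<Sum>l<d. complex_of_real (b l) * frob n (A l) X)"
    unfolding frob_def by (subst sum_swap3) (simp add: sum_distrib_left)
  finally show ?thesis unfolding mtrace_def by (simp add: sum_distrib_left)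
qed

lemma psd_dual_matrix:
  assumes K: "real_or_complex K" and A: "\<forall>i<d. psd K n (A i)"
    and nonneg: "\<forall>x\<in>Kvec K n. 0 \<le> Re (qform n (dual_matrix d V b A) x)"
  shows "psd K n (dual_matrix d V b A)"
  unfolding psd_def
proof (intro conjI)
  show "Kmat K n (dual_matrix d V b A)"
    using A K unfolding Kmat_def dual_matrix_def psd_def
    by (auto intro!: scalar_diff scalar_sum scalar_mult scalar_of_real)
  show "hermitian n (dual_matrix d V b A)"
    unfolding hermitian_def dual_matrix_def
  proof (intro allI impI)
    fix i j assume "i < n" "j < n"
    then have "\<forall>l<d. A l j i = cnj (A l i j)" using A unfolding psd_def hermitian_def by blast
    then show "(if j = i then complex_of_real V else 0) - (\<Sum>l<d. complex_of_real (b l) * A l j i) =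
      cnj ((if i = j then complex_of_real V else 0) - (\<Sum>l<d. complex_of_real (b l) * A l i j))"
      by (auto simp: cnj_sum intro!: sum.cong)
  qed
qed (use nonneg in auto)

section \<open>The semidefinite program and its dual\<close>

definition sdp_values :: "complex set \<Rightarrow> nat \<Rightarrow> nat \<Rightarrow> (nat \<Rightarrow> nat \<Rightarrow> nat \<Rightarrow> complex) \<Rightarrow> real set" where
  "sdp_values K n d A = {root d (\<Prod>i<d. Re (frob n (A i) X)) | X. psd K n X \<and> mtrace n X = 1}"

lemma OptSDP_eq_Sup: "OptSDP K n d A = Sup (sdp_values K n d A)"
  unfolding OptSDP_def sdp_values_def ..

definition dual_form :: "nat \<Rightarrow> nat \<Rightarrow> (nat \<Rightarrow> nat \<Rightarrow> nat \<Rightarrow> complex) \<Rightarrow> real \<Rightarrow> (nat \<Rightarrow> real) \<Rightarrow> (nat \<Rightarrow> complex) \<Rightarrow> real" where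
  "dual_form n d A V \<alpha> x = V * vnorm2 n x - (1 / real d) * (\<Sum>i<d. \<alpha> i * Re (qform n (A i) x))"

definition dual_feasible :: "complex set \<Rightarrow> nat \<Rightarrow> nat \<Rightarrow> (nat \<Rightarrow> nat \<Rightarrow> nat \<Rightarrow> complex) \<Rightarrow> real \<Rightarrow> (nat \<Rightarrow> real) \<Rightarrow> bool" where
  "dual_feasible K n d A V \<alpha> \<longleftrightarrow>
    (\<forall>i<d. 0 < \<alpha> i) \<and> 1 \<le> (\<Prod>i<d. \<alpha> i) \<and> (\<forall>x\<in>Kvec K n. 0 \<le> dual_form n d A V \<alpha> x)"

definition dual_values :: "complex set \<Rightarrow> nat \<Rightarrow> nat \<Rightarrow> (nat \<Rightarrow> nat \<Rightarrow> nat \<Rightarrow> complex) \<Rightarrow> real set" where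
  "dual_values K n d A = {V. 0 \<le> V \<and> (\<exists>\<alpha>. dual_feasible K n d A V \<alpha>)}"

lemma Re_qform_dual_matrix:
  "Re (qform n (dual_matrix d V (\<lambda>i. \<alpha> i / real d) A) x) = dual_form n d A V \<alpha> x"
  unfolding qform_dual_matrix dual_form_def by (simp add: Re_sum sum_distrib_left)

lemma psd_dual_matrix_iff:
  assumes "real_or_complex K" "\<forall>i<d. psd K n (A i)"
  shows "psd K n (dual_matrix d V (\<lambda>i. \<alpha> i / real d) A) \<longleftrightarrow> (\<forall>x\<in>Kvec K n. 0 \<le> dual_form n d A V \<alpha> x)"
  using psd_dual_matrix[OF assms] Re_qform_dual_matrix unfolding psd_def by metis

lemma sos_dual_form_iff:
  assumes "real_or_complex K" "\<forall>i<d. psd K n (A i)"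
  shows "sos K n (dual_form n d A V \<alpha>) \<longleftrightarrow> (\<forall>x\<in>Kvec K n. 0 \<le> dual_form n d A V \<alpha> x)"
proof
  assume "\<forall>x\<in>Kvec K n. 0 \<le> dual_form n d A V \<alpha> x"
  then have "sos K n (\<lambda>x. Re (qform n (dual_matrix d V (\<lambda>i. \<alpha> i / real d) A) x))"
    using psd_dual_matrix_iff[OF assms] psd_sos[OF assms(1)] by blast
  then show "sos K n (dual_form n d A V \<alpha>)" by (simp add: Re_qform_dual_matrix)
qed (use sos_nonneg in blast)

lemma root_prod_le_mean:
  fixes y :: "nat \<Rightarrow> real"
  assumes "1 \<le> d" "\<And>i. i < d \<Longrightarrow> 0 \<le> y i"
  shows "root d (\<Prod>i<d. y i) \<le> (\<Sum>i<d. y i) / real d"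
proof -
  have "{..<d} \<noteq> {}" using assms(1) by (auto simp: lessThan_empty_iff)
  then have "(\<Prod>i<d. y i) powr (1 / real d) \<le> (\<Sum>i<d. y i / real d)"
    using arith_geom_mean[of "{..<d}" y] assms(2) by simp
  moreover have "0 \<le> (\<Prod>i<d. y i)" using assms(2) by (intro prod_nonneg) auto
  then have "root d (\<Prod>i<d. y i) = (\<Prod>i<d. y i) powr (1 / real d)"
  proof (cases "(\<Prod>i<d. y i) = 0")
    case True
    then show ?thesis unfolding True by simp
  qed (use assms(1) in \<open>simp add: root_powr_inverse\<close>)
  ultimately show ?thesis by (simp add: sum_divide_distrib)
qed

text \<open>Weak duality: evaluate the dual matrix against \<open>X\<close>, then use AM-GM on the weighted values.\<close>

lemma sdp_value_le_dual:
  assumes K: "real_or_complex K" and d: "1 \<le> d" and A: "\<forall>i<d. psd K n (A i)"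
    and feas: "dual_feasible K n d A V \<alpha>" and X: "psd K n X" "mtrace n X = 1"
  shows "root d (\<Prod>i<d. Re (frob n (A i) X)) \<le> V"
proof -
  define t where "t i = Re (frob n (A i) X)" for i
  have t: "0 \<le> t i" if "i < d" for i unfolding t_def using psd_frob_nonneg[OF K _ X(1)] A that by blast
  have \<alpha>: "\<forall>i<d. 0 < \<alpha> i" "1 \<le> (\<Prod>i<d. \<alpha> i)" using feas unfolding dual_feasible_def by auto
  have "psd K n (dual_matrix d V (\<lambda>i. \<alpha> i / real d) A)"
    using feas psd_dual_matrix_iff[OF K A] unfolding dual_feasible_def by blast
  then have "0 \<le> Re (frob n (dual_matrix d V (\<lambda>i. \<alpha> i / real d) A) X)"
    by (rule psd_frob_nonneg[OF K _ X(1)])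
  then have mean: "(\<Sum>i<d. \<alpha> i * t i) / real d \<le> V"
    using X(2) unfolding frob_dual_matrix t_def by (simp add: Re_sum sum_divide_distrib)
  have "0 \<le> (\<Prod>i<d. t i)" using t by (intro prod_nonneg) auto
  then have "(\<Prod>i<d. t i) \<le> (\<Prod>i<d. \<alpha> i) * (\<Prod>i<d. t i)"
    using \<alpha>(2) by (simp add: mult_le_cancel_right1)
  then have "root d (\<Prod>i<d. t i) \<le> root d (\<Prod>i<d. \<alpha> i * t i)"
    using d by (simp add: prod.distrib)
  also have "\<dots> \<le> (\<Sum>i<d. \<alpha> i * t i) / real d"
    using d \<alpha>(1) t by (intro root_prod_le_mean) auto
  finally have "root d (\<Prod>i<d. t i) \<le> V" using mean by linarith
  then show ?thesis unfolding t_def .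
qed

lemma sum_Re_qform_le:
  "(\<Sum>i<d. Re (qform n (A i) x)) \<le> (\<Sum>i<d. \<Sum>a<n. \<Sum>b<n. cmod (A i a b)) * vnorm2 n x"
proof -
  have "(\<Sum>i<d. Re (qform n (A i) x)) \<le> (\<Sum>i<d. (\<Sum>a<n. \<Sum>b<n. cmod (A i a b)) * vnorm2 n x)"
    by (intro sum_mono Re_qform_le_entry_norms)
  then show ?thesis by (simp only: sum_distrib_right)
qed

lemma dual_feasible_entry_norms:
  assumes "1 \<le> d" "\<forall>i<d. psd K n (A i)"
  shows "dual_feasible K n d A (\<Sum>i<d. \<Sum>a<n. \<Sum>b<n. cmod (A i a b)) (\<lambda>_. 1)"
  unfolding dual_feasible_def dual_form_def
proof (intro conjI ballI allI impI)
  fix x assume x: "x \<in> Kvec K n"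
  have "0 \<le> (\<Sum>i<d. Re (qform n (A i) x))"
    using assms(2) x unfolding psd_def by (intro sum_nonneg) blast
  then have "(1 / real d) * (\<Sum>i<d. Re (qform n (A i) x)) \<le> (\<Sum>i<d. Re (qform n (A i) x))"
    using assms(1) by (simp add: divide_le_eq mult_le_cancel_left1)
  then show "0 \<le> (\<Sum>i<d. \<Sum>a<n. \<Sum>b<n. cmod (A i a b)) * vnorm2 n x - 1 / real d * (\<Sum>i<d. 1 * Re (qform n (A i) x))"
    using sum_Re_qform_le[where d=d and n=n and A=A and x=x] by simp
qed auto

lemma sdp_values_nonneg:
  assumes "real_or_complex K" "\<forall>i<d. psd K n (A i)" "y \<in> sdp_values K n d A"
  shows "0 \<le> y"
  using assms(2,3) psd_frob_nonneg[OF assms(1)] unfolding sdp_values_def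
  by (auto intro!: real_root_ge_zero prod_nonneg)

lemma sdp_values_nonempty:
  assumes K: "real_or_complex K" and n: "1 \<le> n"
  shows "sdp_values K n d A \<noteq> {}"
proof -
  define e where "e = (\<lambda>j::nat. if j = 0 then (1::complex) else 0)"
  have "vnorm2 n e = (\<Sum>j<n. if j = 0 then 1 else 0)"
    unfolding vnorm2_def by (intro sum.cong) (auto simp: e_def)
  also have "\<dots> = 1" using n by simp
  finally have "vnorm2 n e = 1" .
  then have "psd K n (outer e)" "mtrace n (outer e) = 1"
    using psd_outer[OF K Kvec_unit[OF K]] mtrace_outer[of n e] unfolding e_def by auto
  then show ?thesis unfolding sdp_values_def by blast
qed

lemma bdd_above_sdp_values:
  assumes "real_or_complex K" "1 \<le> d" "\<forall>i<d. psd K n (A i)"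
  shows "bdd_above (sdp_values K n d A)"
  using sdp_value_le_dual[OF assms dual_feasible_entry_norms[OF assms(2,3)]]
  unfolding sdp_values_def by (intro bdd_aboveI) blast

lemma OptSDP_le_dual_value:
  assumes "real_or_complex K" "1 \<le> n" "1 \<le> d" "\<forall>i<d. psd K n (A i)" "V \<in> dual_values K n d A"
  shows "OptSDP K n d A \<le> V"
  unfolding OptSDP_eq_Sup
proof (rule cSup_least[OF sdp_values_nonempty[OF assms(1,2)]])
  fix y assume "y \<in> sdp_values K n d A"
  then show "y \<le> V"
    using sdp_value_le_dual[OF assms(1,3,4)] assms(5) unfolding sdp_values_def dual_values_def by blast
qed

section \<open>Existence of an optimal solution\<close>

lemma convergent_subsequence_finite:
  fixes f :: "nat \<Rightarrow> 'p \<Rightarrow> 'a::{heine_borel, real_normed_vector}"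
  assumes "finite P" and B: "\<And>m p. p \<in> P \<Longrightarrow> norm (f m p) \<le> B"
  shows "\<exists>r. strict_mono r \<and> (\<forall>p\<in>P. convergent (\<lambda>m. f (r m) p))"
  using assms(1) B
proof (induction P rule: finite_induct)
  case empty
  then show ?case by (intro exI[of _ id]) (auto simp: strict_mono_def)
next
  case (insert q P)
  obtain r where r: "strict_mono r" "\<forall>p\<in>P. convergent (\<lambda>m. f (r m) p)" using insert by auto
  have "bounded (range (\<lambda>m. f (r m) q))" using insert.prems unfolding bounded_iff by auto
  then obtain l r2 where r2: "strict_mono r2" "((\<lambda>m. f (r m) q) \<circ> r2) \<longlonglongrightarrow> l"
    using bounded_imp_convergent_subsequence by blast
  show ?case
  proof (intro exI[of _ "r \<circ> r2"] conjI ballI)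
    show "strict_mono (r \<circ> r2)" using r(1) r2(1) by (rule strict_mono_o)
    fix p assume "p \<in> insert q P"
    then show "convergent (\<lambda>m. f ((r \<circ> r2) m) p)"
    proof
      assume "p = q"
      then show ?thesis using r2(2) unfolding convergent_def comp_def by auto
    next
      assume "p \<in> P"
      then obtain L where "(\<lambda>m. f (r m) p) \<longlonglongrightarrow> L" using r(2) convergent_def by blast
      then have "((\<lambda>m. f (r m) p) \<circ> r2) \<longlonglongrightarrow> L" using r2(1) by (rule LIMSEQ_subseq_LIMSEQ)
      then show ?thesis unfolding convergent_def comp_def by auto
    qed
  qed
qed

lemma psd_trace1_entry_bound:
  assumes K: "real_or_complex K" and P: "psd K n X" and tr: "mtrace n X = 1" and i: "i < n" and j: "j < n"
  shows "cmod (X i j) \<le> 1"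
proof -
  obtain U where U: "gram_factor K n U X" using psd_gram_factor[OF K P] by blast
  have diag: "Re (X a a) = (\<Sum>k<n. (cmod (U k a))^2)" if "a < n" for a
    using U that unfolding gram_factor_def by (simp only: Re_sum Re_cnj_mult_self cmod_power2)
  have dn: "0 \<le> Re (X a a)" if "a < n" for a using diag[OF that] by (simp add: sum_nonneg)
  have tr1: "(\<Sum>a<n. Re (X a a)) = 1" using tr unfolding mtrace_def by (metis Re_sum one_complex.sel)
  have dle: "Re (X a a) \<le> 1" if "a < n" for a
  proof -
    have "Re (X a a) \<le> (\<Sum>a<n. Re (X a a))" using that dn by (intro member_le_sum) auto
    then show ?thesis using tr1 by simp
  qed
  have "cmod (X i j) = cmod (\<Sum>k<n. cnj (U k i) * U k j)" using U i j unfolding gram_factor_def by simp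
  also have "\<dots> \<le> (\<Sum>k<n. cmod (U k i) * cmod (U k j))"
    by (rule order_trans[OF norm_sum]) (simp add: norm_mult)
  also have "\<dots> \<le> (\<Sum>k<n. ((cmod (U k i))^2 + (cmod (U k j))^2) / 2)"
  proof (rule sum_mono)
    fix k
    show "cmod (U k i) * cmod (U k j) \<le> ((cmod (U k i))^2 + (cmod (U k j))^2) / 2"
      using sum_squares_bound[of "cmod (U k i)" "cmod (U k j)"] by (simp add: field_simps)
  qed
  also have "\<dots> = (Re (X i i) + Re (X j j)) / 2"
    using diag i j by (simp add: sum.distrib flip: sum_divide_distrib)
  also have "\<dots> \<le> 1" using dle[OF i] dle[OF j] by simp
  finally show ?thesis .
qed

lemma tendsto_qform:
  "(\<And>i j. i < n \<Longrightarrow> j < n \<Longrightarrow> (\<lambda>m. Y m i j) \<longlonglongrightarrow> Z i j) \<Longrightarrow> (\<lambda>m. qform n (Y m) x) \<longlonglongrightarrow> qform n Z x"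
  unfolding qform_def by (intro tendsto_sum; rule tendsto_mult_right, rule tendsto_mult_left) auto

lemma tendsto_frob:
  "(\<And>i j. i < n \<Longrightarrow> j < n \<Longrightarrow> (\<lambda>m. Y m i j) \<longlonglongrightarrow> Z i j) \<Longrightarrow> (\<lambda>m. frob n A (Y m)) \<longlonglongrightarrow> frob n A Z"
  unfolding frob_def by (intro tendsto_sum; rule tendsto_mult_left) auto

lemma tendsto_mtrace:
  "(\<And>i j. i < n \<Longrightarrow> j < n \<Longrightarrow> (\<lambda>m. Y m i j) \<longlonglongrightarrow> Z i j) \<Longrightarrow> (\<lambda>m. mtrace n (Y m)) \<longlonglongrightarrow> mtrace n Z"
  unfolding mtrace_def by (intro tendsto_sum) auto

lemma psd_trace1_limit:
  assumes K: "real_or_complex K" and P: "\<And>m. psd K n (Y m)" and tr: "\<And>m. mtrace n (Y m) = 1"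
    and lim: "\<And>i j. i < n \<Longrightarrow> j < n \<Longrightarrow> (\<lambda>m. Y m i j) \<longlonglongrightarrow> Z i j"
  shows "psd K n Z" "mtrace n Z = 1"
proof -
  have "(\<lambda>m. mtrace n (Y m)) \<longlonglongrightarrow> mtrace n Z" by (rule tendsto_mtrace[OF lim])
  then have "(\<lambda>m. 1) \<longlonglongrightarrow> mtrace n Z" using tr by simp
  then show "mtrace n Z = 1" using LIMSEQ_unique[OF _ tendsto_const] by blast
  show "psd K n Z" unfolding psd_def
  proof (intro conjI ballI)
    show "Kmat K n Z" unfolding Kmat_def
    proof (intro allI impI)
      fix i j assume ij: "i < n" "j < n"
      show "Z i j \<in> K" using K
      proof
        assume KR: "K = \<real>"
        have "\<forall>m. Im (Y m i j) = 0"
          using P ij KR unfolding psd_def Kmat_def by (auto simp: complex_is_Real_iff)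
        then have "(\<lambda>m. Im (Y m i j)) \<longlonglongrightarrow> 0" by simp
        then have "Im (Z i j) = 0" using LIMSEQ_unique tendsto_Im[OF lim[OF ij]] by blast
        then show ?thesis using KR by (simp add: complex_is_Real_iff)
      qed auto
    qed
    show "hermitian n Z" unfolding hermitian_def
    proof (intro allI impI)
      fix i j assume ij: "i < n" "j < n"
      have "\<forall>m. Y m j i = cnj (Y m i j)" using P ij unfolding psd_def hermitian_def by blast
      then have "(\<lambda>m. Y m j i) \<longlonglongrightarrow> cnj (Z i j)" using tendsto_cnj[OF lim[OF ij]] by simp
      then show "Z j i = cnj (Z i j)" using lim[of j i] ij LIMSEQ_unique by blast
    qed
    fix x assume x: "x \<in> Kvec K n"
    have "(\<lambda>m. Re (qform n (Y m) x)) \<longlonglongrightarrow> Re (qform n Z x)" by (intro tendsto_Re tendsto_qform lim)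
    moreover have "\<forall>m. 0 \<le> Re (qform n (Y m) x)" using P x unfolding psd_def by blast
    ultimately show "0 \<le> Re (qform n Z x)" by (intro LIMSEQ_le_const) auto
  qed
qed

lemma psd_trace1_convergent_subseq:
  fixes Y :: "nat \<Rightarrow> nat \<Rightarrow> nat \<Rightarrow> complex"
  assumes K: "real_or_complex K" and P: "\<And>m. psd K n (Y m)" and tr: "\<And>m. mtrace n (Y m) = 1"
  obtains r Z where "strict_mono r" "psd K n Z" "mtrace n Z = 1"
    "\<And>i j. i < n \<Longrightarrow> j < n \<Longrightarrow> (\<lambda>m. Y (r m) i j) \<longlonglongrightarrow> Z i j"
proof -
  have "\<exists>r. strict_mono r \<and> (\<forall>p\<in>{..<n} \<times> {..<n}. convergent (\<lambda>m. Y (r m) (fst p) (snd p)))"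
    by (rule convergent_subsequence_finite[where B=1]) (use psd_trace1_entry_bound[OF K P tr] in auto)
  then obtain r where r: "strict_mono r"
    and conv: "\<And>i j. i < n \<Longrightarrow> j < n \<Longrightarrow> convergent (\<lambda>m. Y (r m) i j)"
    by force
  define Z where "Z i j = lim (\<lambda>m. Y (r m) i j)" for i j
  have lim: "(\<lambda>m. Y (r m) i j) \<longlonglongrightarrow> Z i j" if "i < n" "j < n" for i j
    using conv[OF that] unfolding Z_def convergent_LIMSEQ_iff .
  show ?thesis by (rule that[OF r psd_trace1_limit[OF K P tr lim] lim])
qed

lemma sdp_maximizer_exists:
  assumes K: "real_or_complex K" and ne: "sdp_values K n d A \<noteq> {}"
    and bdd: "bdd_above (sdp_values K n d A)"
  obtains X where "psd K n X" "mtrace n X = 1" "root d (\<Prod>i<d. Re (frob n (A i) X)) = OptSDP K n d A"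
proof -
  define F where "F X = root d (\<Prod>i<d. Re (frob n (A i) X))" for X
  define S where "S = Sup (sdp_values K n d A)"
  have "\<forall>m. \<exists>X. psd K n X \<and> mtrace n X = 1 \<and> S - inverse (real (Suc m)) < F X"
  proof
    fix m
    have "S - inverse (real (Suc m)) < S" by simp
    then obtain y where "y \<in> sdp_values K n d A" "S - inverse (real (Suc m)) < y"
      using less_cSupE[OF _ ne] unfolding S_def by blast
    then show "\<exists>X. psd K n X \<and> mtrace n X = 1 \<and> S - inverse (real (Suc m)) < F X"
      unfolding sdp_values_def F_def by blast
  qed
  then obtain Y where Y: "\<And>m. psd K n (Y m)" "\<And>m. mtrace n (Y m) = 1"
    "\<And>m. S - inverse (real (Suc m)) < F (Y m)" by metis
  obtain r Z where r: "strict_mono r" and Z: "psd K n Z" "mtrace n Z = 1"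
    and lim: "\<And>i j. i < n \<Longrightarrow> j < n \<Longrightarrow> (\<lambda>m. Y (r m) i j) \<longlonglongrightarrow> Z i j"
    using psd_trace1_convergent_subseq[where Y=Y, OF K Y(1,2)] by blast
  have "F Z \<le> S" using Z bdd unfolding S_def F_def sdp_values_def by (intro cSup_upper) auto
  moreover have "S \<le> F Z"
  proof (rule LIMSEQ_le)
    show "(\<lambda>m. S - inverse (real (Suc m))) \<longlonglongrightarrow> S"
      using tendsto_diff[OF tendsto_const LIMSEQ_inverse_real_of_nat] by simp
    show "(\<lambda>m. F (Y (r m))) \<longlonglongrightarrow> F Z"
      unfolding F_def by (intro tendsto_real_root tendsto_prod tendsto_Re tendsto_frob lim)
    show "\<exists>N. \<forall>m\<ge>N. S - inverse (real (Suc m)) \<le> F (Y (r m))"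
    proof (intro exI allI impI)
      fix m
      have "inverse (real (Suc (r m))) \<le> inverse (real (Suc m))"
        using seq_suble[OF r, of m] by (intro le_imp_inverse_le) auto
      then show "S - inverse (real (Suc m)) \<le> F (Y (r m))" using Y(3)[of "r m"] by linarith
    qed
  qed
  ultimately have "F Z = S" by simp
  then show ?thesis using that[OF Z] unfolding F_def S_def OptSDP_eq_Sup by simp
qed

section \<open>Strong duality\<close>

text \<open>First-order optimality: if moving from \<open>t\<close> towards \<open>a\<close> never increases \<open>\<Prod> t\<^sub>i\<close>, then
  the directional derivative \<open>(\<Prod> t\<^sub>i) (\<Sum> a\<^sub>i / t\<^sub>i - d)\<close> at \<open>t\<close> is nonpositive.\<close>

lemma sum_ratio_le_of_prod_max:
  fixes t a :: "nat \<Rightarrow> real"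
  assumes t: "\<And>i. i < d \<Longrightarrow> 0 < t i"
    and le: "\<And>s. 0 \<le> s \<Longrightarrow> s \<le> 1 \<Longrightarrow> (\<Prod>i<d. (1 - s) * t i + s * a i) \<le> (\<Prod>i<d. t i)"
  shows "(\<Sum>i<d. a i / t i) \<le> real d"
proof (rule ccontr)
  assume "\<not> ?thesis"
  then have gt: "(\<Sum>i<d. a i / t i) - real d > 0" by simp
  define phi where "phi s = (\<Prod>i<d. (1 - s) * t i + s * a i)" for s
  define D where "D = (\<Sum>i<d. (a i - t i) * (\<Prod>j\<in>{..<d} - {i}. t j))"
  have "(phi has_derivative (\<lambda>h. \<Sum>i<d. h * (a i - t i) * (\<Prod>j\<in>{..<d} - {i}. (1 - 0) * t j + 0 * a j))) (at 0)"
    unfolding phi_def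
    by (rule has_derivative_prod) (auto intro!: derivative_eq_intros simp: algebra_simps)
  then have deriv: "(phi has_field_derivative D) (at 0)"
    unfolding has_field_derivative_def D_def
    by (rule has_derivative_eq_rhs) (auto simp: fun_eq_iff sum_distrib_left algebra_simps)
  have "(\<Prod>j\<in>{..<d} - {i}. t j) = (\<Prod>i<d. t i) / t i" if "i < d" for i
    using prod.remove[of "{..<d}" i t] that t[OF that] by simp
  then have "D = (\<Sum>i<d. (a i - t i) * ((\<Prod>i<d. t i) / t i))" unfolding D_def by (intro sum.cong) auto
  also have "\<dots> = (\<Prod>i<d. t i) * (\<Sum>i<d. a i / t i - 1)"
    unfolding sum_distrib_left
  proof (intro sum.cong refl)
    fix i assume "i \<in> {..<d}"
    then have "t i > 0" using t by auto
    then show "(a i - t i) * ((\<Prod>i<d. t i) / t i) = (\<Prod>i<d. t i) * (a i / t i - 1)"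
      by (simp add: field_simps)
  qed
  finally have "D = (\<Prod>i<d. t i) * ((\<Sum>i<d. a i / t i) - real d)" by (simp add: sum_subtractf)
  moreover have "(\<Prod>i<d. t i) > 0" using t by (intro prod_pos) auto
  ultimately have "D > 0" using gt by simp
  then obtain e where e: "e > 0" "\<forall>h>0. h < e \<longrightarrow> phi 0 < phi (0 + h)"
    using DERIV_pos_inc_right[OF deriv] by blast
  define h where "h = min (e/2) 1"
  have "phi 0 < phi h" using e unfolding h_def by auto
  moreover have "phi h \<le> phi 0" unfolding phi_def using le[of h] e unfolding h_def by auto
  ultimately show False by simp
qed

lemma psd_trace1_mix_outer:
  assumes K: "real_or_complex K" and X: "psd K n X" "mtrace n X = 1"
    and v: "v \<in> Kvec K n" "vnorm2 n v = 1" and s: "0 \<le> s" "s \<le> 1"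
  obtains Y where "psd K n Y" "mtrace n Y = 1"
    "\<And>M. hermitian n M \<Longrightarrow> frob n M Y = complex_of_real (1 - s) * frob n M X + complex_of_real s * qform n M v"
proof
  define c where "c l = (if l = 0 then 1 - s else s)" for l :: nat
  define W where "W l = (if l = 0 then X else outer v)" for l :: nat
  show "psd K n (matrix_comb {0, 1} c W)"
    unfolding c_def W_def using s X psd_outer[OF K v(1)] by (intro psd_matrix_comb[OF K]) auto
  show "mtrace n (matrix_comb {0, 1} c W) = 1"
    unfolding mtrace_matrix_comb c_def W_def using X mtrace_outer[of n v] v by (simp flip: of_real_add)
  show "frob n M (matrix_comb {0, 1} c W) = complex_of_real (1 - s) * frob n M X + complex_of_real s * qform n M v"
    if "hermitian n M" for M
    unfolding frob_matrix_comb c_def W_def using frob_outer[OF that] by simp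
qed

text \<open>At a maximiser \<open>X\<close> with values \<open>t\<^sub>i = \<langle>A\<^sub>i, X\<rangle> > 0\<close>, mixing in the rank-one matrix \<open>v v\<^sup>\<dagger>\<close>
  gives \<open>\<Sum> \<langle>v, A\<^sub>i v\<rangle> / t\<^sub>i \<le> d\<close> for unit vectors \<open>v\<close>: this is the dual certificate with
  weights \<open>\<alpha>\<^sub>i = V / t\<^sub>i\<close>.\<close>

lemma maximizer_dual_form_nonneg:
  assumes K: "real_or_complex K" and d: "1 \<le> d" and A: "\<forall>i<d. psd K n (A i)"
    and X: "psd K n X" "mtrace n X = 1"
    and t: "\<forall>i<d. 0 < Re (frob n (A i) X)"
    and max: "\<And>Y. psd K n Y \<Longrightarrow> mtrace n Y = 1 \<Longrightarrow>
      (\<Prod>i<d. Re (frob n (A i) Y)) \<le> (\<Prod>i<d. Re (frob n (A i) X))"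
    and V: "0 \<le> V"
    and x: "x \<in> Kvec K n"
  shows "0 \<le> dual_form n d A V (\<lambda>i. V / Re (frob n (A i) X)) x"
proof (cases "vnorm2 n x = 0")
  case True
  then show ?thesis unfolding dual_form_def by (simp add: vnorm2_eq_0_imp_qform_eq_0)
next
  case False
  then have N: "0 < vnorm2 n x" using vnorm2_nonneg[of n x] by simp
  obtain v where v: "v \<in> Kvec K n" "vnorm2 n v = 1"
    and vq: "\<And>M. qform n M v = complex_of_real (1 / vnorm2 n x) * qform n M x"
    using Kvec_normalize[OF K x N] by blast
  define T where "T i = Re (frob n (A i) X)" for i
  define a where "a i = Re (qform n (A i) v)" for i
  have HA: "hermitian n (A i)" if "i < d" for i using A that unfolding psd_def by blast
  have first_order: "(\<Sum>i<d. a i / T i) \<le> real d"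
  proof (rule sum_ratio_le_of_prod_max)
    show "\<And>i. i < d \<Longrightarrow> 0 < T i" using t T_def by auto
    fix s :: real assume "0 \<le> s" "s \<le> 1"
    then obtain Y where Y: "psd K n Y" "mtrace n Y = 1"
      and fY: "\<And>M. hermitian n M \<Longrightarrow> frob n M Y = complex_of_real (1 - s) * frob n M X + complex_of_real s * qform n M v"
      using psd_trace1_mix_outer[OF K X v] by blast
    have "(\<Prod>i<d. (1 - s) * T i + s * a i) = (\<Prod>i<d. Re (frob n (A i) Y))"
      unfolding T_def a_def using fY[OF HA] by (intro prod.cong) auto
    also have "\<dots> \<le> (\<Prod>i<d. T i)" using max[OF Y] unfolding T_def .
    finally show "(\<Prod>i<d. (1 - s) * T i + s * a i) \<le> (\<Prod>i<d. T i)" .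
  qed
  have "Re (qform n (A i) x) = vnorm2 n x * a i" for i
    unfolding a_def vq using N by simp
  then have "(1 / real d) * (\<Sum>i<d. (V / T i) * Re (qform n (A i) x))
      = (V * vnorm2 n x / real d) * (\<Sum>i<d. a i / T i)"
    by (simp add: sum_distrib_left algebra_simps)
  also have "\<dots> \<le> (V * vnorm2 n x / real d) * real d"
    using first_order V N by (intro mult_left_mono) auto
  also have "\<dots> = V * vnorm2 n x" using d by simp
  finally show ?thesis unfolding dual_form_def T_def by simp
qed

lemma OptSDP_nonneg:
  assumes "real_or_complex K" "1 \<le> n" "1 \<le> d" "\<forall>i<d. psd K n (A i)"
  shows "0 \<le> OptSDP K n d A"
proof -
  obtain y where y: "y \<in> sdp_values K n d A" using sdp_values_nonempty[OF assms(1,2)] by blast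
  then have "y \<le> OptSDP K n d A"
    unfolding OptSDP_eq_Sup using bdd_above_sdp_values[OF assms(1,3,4)] by (rule cSup_upper)
  then show ?thesis using sdp_values_nonneg[OF assms(1,4) y] by linarith
qed

text \<open>If some \<open>A\<^sub>i\<^sub>0\<close> vanishes on \<open>K\<^sup>n\<close>, the optimum is \<open>0\<close>, approached by giving \<open>A\<^sub>i\<^sub>0\<close> the huge
  weight \<open>\<delta>\<^sup>1\<^sup>-\<^sup>d\<close> and all other matrices the small weight \<open>\<delta>\<close>.\<close>

lemma degenerate_dual_values:
  assumes d: "1 \<le> d" and A: "\<forall>i<d. psd K n (A i)"
    and i0: "i0 < d" and zero: "\<forall>x\<in>Kvec K n. Re (qform n (A i0) x) = 0" and e: "0 < \<epsilon>"
  shows "\<exists>V\<in>dual_values K n d A. V \<le> \<epsilon>"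
proof -
  define C where "C = (\<Sum>i<d. \<Sum>a<n. \<Sum>b<n. cmod (A i a b))"
  have C0: "0 \<le> C" unfolding C_def by (simp add: sum_nonneg)
  define \<delta> where "\<delta> = \<epsilon> / (C + 1)"
  have \<delta>0: "0 < \<delta>" unfolding \<delta>_def using e C0 by simp
  define \<alpha> where "\<alpha> i = (if i = i0 then 1 / \<delta>^(d-1) else \<delta>)" for i
  have "(\<Prod>i<d. \<alpha> i) = \<alpha> i0 * (\<Prod>i\<in>{..<d} - {i0}. \<alpha> i)" using i0 by (simp add: prod.remove)
  also have "(\<Prod>i\<in>{..<d} - {i0}. \<alpha> i) = \<delta>^(d-1)" unfolding \<alpha>_def using i0 by simp
  finally have prod: "(\<Prod>i<d. \<alpha> i) = 1" unfolding \<alpha>_def using \<delta>0 by simp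
  have "0 \<le> dual_form n d A (\<delta> * C) \<alpha> x" if x: "x \<in> Kvec K n" for x
  proof -
    have q0: "0 \<le> Re (qform n (A i) x)" if "i < d" for i using A that x unfolding psd_def by blast
    have "(\<Sum>i<d. \<alpha> i * Re (qform n (A i) x)) = \<delta> * (\<Sum>i<d. Re (qform n (A i) x))"
      unfolding sum_distrib_left \<alpha>_def using zero x by (intro sum.cong) auto
    also have "\<dots> \<le> \<delta> * C * vnorm2 n x"
      using sum_Re_qform_le[where d=d and n=n and A=A and x=x] \<delta>0 unfolding C_def by simp
    finally have le: "(\<Sum>i<d. \<alpha> i * Re (qform n (A i) x)) \<le> \<delta> * C * vnorm2 n x" .
    have "0 \<le> (\<Sum>i<d. \<alpha> i * Re (qform n (A i) x))"
      using q0 \<delta>0 unfolding \<alpha>_def by (intro sum_nonneg) auto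
    then have "(1 / real d) * (\<Sum>i<d. \<alpha> i * Re (qform n (A i) x)) \<le> (\<Sum>i<d. \<alpha> i * Re (qform n (A i) x))"
      using d by (simp add: divide_le_eq mult_le_cancel_left1)
    then show ?thesis unfolding dual_form_def using le by linarith
  qed
  moreover have "\<forall>i<d. 0 < \<alpha> i" unfolding \<alpha>_def using \<delta>0 by simp
  moreover have "\<delta> * C \<le> \<epsilon>" unfolding \<delta>_def using e C0 by (simp add: field_simps)
  ultimately show ?thesis
    using \<delta>0 C0 prod unfolding dual_values_def dual_feasible_def by (intro bexI[of _ "\<delta> * C"]) auto
qed

lemma unit_vector_qform_pos:
  assumes K: "real_or_complex K" and x: "x \<in> Kvec K n" and pos: "0 < Re (qform n M x)"
  obtains v where "v \<in> Kvec K n" "vnorm2 n v = 1" "0 < Re (qform n M v)"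
proof -
  have "vnorm2 n x \<noteq> 0" using pos vnorm2_eq_0_imp_qform_eq_0 by fastforce
  then have N: "0 < vnorm2 n x" using vnorm2_nonneg[of n x] by simp
  obtain v where "v \<in> Kvec K n" "vnorm2 n v = 1" "qform n M v = complex_of_real (1 / vnorm2 n x) * qform n M x"
    using Kvec_normalize[OF K x N] by metis
  then show ?thesis using that pos N by simp
qed

lemma sdp_feasible_pos:
  fixes d :: nat
  assumes K: "real_or_complex K" and d: "1 \<le> d" and A: "\<forall>i<d. psd K n (A i)"
    and pos: "\<forall>i<d. \<exists>x\<in>Kvec K n. 0 < Re (qform n (A i) x)"
  obtains X where "psd K n X" "mtrace n X = 1" "\<forall>i<d. 0 < Re (frob n (A i) X)"
proof -
  have "\<forall>i\<in>{..<d}. \<exists>v. v \<in> Kvec K n \<and> vnorm2 n v = 1 \<and> 0 < Re (qform n (A i) v)"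
    using pos unit_vector_qform_pos[OF K] by (metis lessThan_iff)
  then obtain vs where vs: "\<And>i. i < d \<Longrightarrow> vs i \<in> Kvec K n \<and> vnorm2 n (vs i) = 1 \<and> 0 < Re (qform n (A i) (vs i))"
    using bchoice[of "{..<d}"] by (metis lessThan_iff)
  define X where "X = matrix_comb {..<d} (\<lambda>_. 1 / real d) (\<lambda>l. outer (vs l))"
  have "psd K n X" unfolding X_def using vs psd_outer[OF K] by (intro psd_matrix_comb[OF K]) auto
  moreover have "mtrace n X = 1" unfolding X_def mtrace_matrix_comb using vs mtrace_outer d
    by (simp flip: of_real_sum)
  moreover have "0 < Re (frob n (A i) X)" if i: "i < d" for i
  proof -
    have H: "hermitian n (A i)" using A i unfolding psd_def by blast
    have e: "Re (frob n (A i) X) = (\<Sum>l<d. (1 / real d) * Re (qform n (A i) (vs l)))"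
      unfolding X_def frob_matrix_comb frob_outer[OF H] by (simp add: Re_sum)
    have "\<forall>l<d. 0 \<le> Re (qform n (A i) (vs l))" using A i vs unfolding psd_def by blast
    then have "(1 / real d) * Re (qform n (A i) (vs i)) \<le> Re (frob n (A i) X)"
      unfolding e using i by (intro member_le_sum) auto
    moreover have "0 < (1 / real d) * Re (qform n (A i) (vs i))" using vs[OF i] d by simp
    ultimately show ?thesis by linarith
  qed
  ultimately show ?thesis using that by blast
qed

lemma OptSDP_pos:
  assumes K: "real_or_complex K" and n: "1 \<le> n" and d: "1 \<le> d" and A: "\<forall>i<d. psd K n (A i)"
    and pos: "\<forall>i<d. \<exists>x\<in>Kvec K n. 0 < Re (qform n (A i) x)"
  shows "0 < OptSDP K n d A"
proof -
  obtain X where X: "psd K n X" "mtrace n X = 1" "\<forall>i<d. 0 < Re (frob n (A i) X)"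
    using sdp_feasible_pos[OF K d A pos] by blast
  then have "0 < (\<Prod>i<d. Re (frob n (A i) X))" by (intro prod_pos) auto
  then have "0 < root d (\<Prod>i<d. Re (frob n (A i) X))" using d by simp
  also have "\<dots> \<le> OptSDP K n d A"
    unfolding OptSDP_eq_Sup using X(1,2) bdd_above_sdp_values[OF K d A]
    by (intro cSup_upper) (auto simp: sdp_values_def)
  finally show ?thesis .
qed

lemma OptSDP_in_dual_values:
  assumes K: "real_or_complex K" and n: "1 \<le> n" and d: "1 \<le> d" and A: "\<forall>i<d. psd K n (A i)"
    and pos: "\<forall>i<d. \<exists>x\<in>Kvec K n. 0 < Re (qform n (A i) x)"
  shows "OptSDP K n d A \<in> dual_values K n d A"
proof -
  define V where "V = OptSDP K n d A"
  have V: "0 < V" unfolding V_def by (rule OptSDP_pos[OF assms])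
  obtain X where X: "psd K n X" "mtrace n X = 1" and FX: "root d (\<Prod>i<d. Re (frob n (A i) X)) = V"
    using sdp_maximizer_exists[OF K sdp_values_nonempty[OF K n] bdd_above_sdp_values[OF K d A]]
    unfolding V_def by blast
  define T where "T i = Re (frob n (A i) X)" for i
  have "0 < root d (\<Prod>i<d. T i)" using FX V unfolding T_def by simp
  then have PT: "0 < (\<Prod>i<d. T i)" using d by simp
  have T: "\<forall>i<d. 0 < T i"
  proof (intro allI impI)
    fix i assume i: "i < d"
    have "T i \<noteq> 0"
    proof
      assume "T i = 0"
      then have "(\<Prod>i<d. T i) = 0" using i by (intro prod_zero) auto
      then show False using PT by linarith
    qed
    moreover have "0 \<le> T i" unfolding T_def using psd_frob_nonneg[OF K _ X(1)] A i by blast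
    ultimately show "0 < T i" by simp
  qed
  have max: "(\<Prod>i<d. Re (frob n (A i) Y)) \<le> (\<Prod>i<d. T i)" if Y: "psd K n Y" "mtrace n Y = 1" for Y
  proof -
    have "root d (\<Prod>i<d. Re (frob n (A i) Y)) \<le> root d (\<Prod>i<d. T i)"
      unfolding T_def FX V_def OptSDP_eq_Sup using Y bdd_above_sdp_values[OF K d A]
      by (intro cSup_upper) (auto simp: sdp_values_def)
    then show ?thesis using d by simp
  qed
  have "(\<Prod>i<d. V / T i) = V ^ d / (\<Prod>i<d. T i)" by (simp add: prod_dividef)
  also have "V ^ d = (\<Prod>i<d. T i)" unfolding FX[symmetric] T_def using d PT T_def by simp
  finally have "(\<Prod>i<d. V / T i) = (\<Prod>i<d. T i) / (\<Prod>i<d. T i)" .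
  then have "(\<Prod>i<d. V / T i) = 1" using PT by (metis divide_self less_irrefl)
  moreover have "\<forall>x\<in>Kvec K n. 0 \<le> dual_form n d A V (\<lambda>i. V / T i) x"
    using maximizer_dual_form_nonneg[OF K d A X] T max V unfolding T_def by auto
  ultimately have "dual_feasible K n d A V (\<lambda>i. V / T i)"
    unfolding dual_feasible_def using T V by simp
  then show ?thesis using V unfolding dual_values_def V_def by auto
qed

lemma dual_values_approx:
  assumes K: "real_or_complex K" and n: "1 \<le> n" and d: "1 \<le> d" and A: "\<forall>i<d. psd K n (A i)"
    and e: "0 < \<epsilon>"
  shows "\<exists>V\<in>dual_values K n d A. V \<le> OptSDP K n d A + \<epsilon>"
proof (cases "\<exists>i0<d. \<forall>x\<in>Kvec K n. Re (qform n (A i0) x) = 0")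
  case True
  then obtain i0 where "i0 < d" "\<forall>x\<in>Kvec K n. Re (qform n (A i0) x) = 0" by blast
  then obtain V where V: "V \<in> dual_values K n d A" "V \<le> \<epsilon>"
    using degenerate_dual_values[OF d A _ _ e] by blast
  then have "V \<le> OptSDP K n d A + \<epsilon>" using OptSDP_nonneg[OF K n d A] by linarith
  then show ?thesis using V(1) by blast
next
  case False
  have "\<forall>i<d. \<exists>x\<in>Kvec K n. 0 < Re (qform n (A i) x)"
  proof (intro allI impI)
    fix i assume i: "i < d"
    then obtain x where x: "x \<in> Kvec K n" "Re (qform n (A i) x) \<noteq> 0" using False by blast
    moreover have "0 \<le> Re (qform n (A i) x)" using A i x unfolding psd_def by blast
    ultimately show "\<exists>x\<in>Kvec K n. 0 < Re (qform n (A i) x)" by force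
  qed
  then have "OptSDP K n d A \<in> dual_values K n d A" by (rule OptSDP_in_dual_values[OF K n d A])
  then show ?thesis using e by (intro bexI[of _ "OptSDP K n d A"]) auto
qed

lemma Inf_dual_values:
  assumes K: "real_or_complex K" and n: "1 \<le> n" and d: "1 \<le> d" and A: "\<forall>i<d. psd K n (A i)"
  shows "Inf (dual_values K n d A) = OptSDP K n d A"
proof (rule antisym)
  have ne: "dual_values K n d A \<noteq> {}" using dual_values_approx[OF assms, of 1] by auto
  show "OptSDP K n d A \<le> Inf (dual_values K n d A)"
    by (rule cInf_greatest[OF ne OptSDP_le_dual_value[OF assms]])
  have bdd: "bdd_below (dual_values K n d A)"
    unfolding dual_values_def by (rule bdd_belowI[of _ 0]) auto
  show "Inf (dual_values K n d A) \<le> OptSDP K n d A"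
  proof (rule field_le_epsilon)
    fix e :: real assume "0 < e"
    then obtain V where "V \<in> dual_values K n d A" "V \<le> OptSDP K n d A + e"
      using dual_values_approx[OF assms] by blast
    then show "Inf (dual_values K n d A) \<le> OptSDP K n d A + e"
      using cInf_lower[OF _ bdd] by fastforce
  qed
qed

section \<open>The sum-of-squares relaxations\<close>

lemma subsetsK_1: "subsetsK d 1 = (\<lambda>i. {i}) ` {..<d}"
  unfolding subsetsK_def by (auto simp: card_1_singleton_iff)

lemma subsetsK_self: "subsetsK d d = {{..<d}}"
proof -
  have "I = {..<d}" if "I \<subseteq> {..<d}" "card I = d" for I
    using card_subset_eq[of "{..<d}" I] that by auto
  then show ?thesis unfolding subsetsK_def by auto
qed

lemma OptSOS_1_eq_Inf_dual_values:
  assumes K: "real_or_complex K" and A: "\<forall>i<d. psd K n (A i)"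
  shows "OptSOS K n d A 1 = Inf (dual_values K n d A)"
proof -
  have inj: "inj_on (\<lambda>i. {i}) {..<d}" by (simp add: inj_on_def)
  have form: "(\<lambda>x. lam * vnorm2 n x ^ 1 - (1 / real (d choose 1)) *
      (\<Sum>I\<in>subsetsK d 1. \<alpha> I * (\<Prod>i\<in>I. Re (qform n (A i) x)))) = dual_form n d A lam (\<lambda>i. \<alpha> {i})"
    for lam \<alpha> unfolding subsetsK_1 dual_form_def by (simp add: sum.reindex[OF inj])
  have "{root 1 lam | lam \<alpha>. lam \<ge> 0 \<and> (\<forall>I\<in>subsetsK d 1. \<alpha> I > 0) \<and> (\<Prod>I\<in>subsetsK d 1. \<alpha> I) \<ge> 1 \<and>
      sos K n (\<lambda>x. lam * vnorm2 n x ^ 1 - (1 / real (d choose 1)) *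
         (\<Sum>I\<in>subsetsK d 1. \<alpha> I * (\<Prod>i\<in>I. Re (qform n (A i) x))))} = dual_values K n d A"
    (is "?L = _")
  proof (intro equalityI subsetI)
    fix V assume "V \<in> ?L"
    then obtain \<alpha> where "0 \<le> V" "\<forall>i<d. 0 < \<alpha> {i}" "1 \<le> (\<Prod>i<d. \<alpha> {i})"
      "sos K n (dual_form n d A V (\<lambda>i. \<alpha> {i}))"
      unfolding form unfolding subsetsK_1 prod.reindex[OF inj] by auto
    then show "V \<in> dual_values K n d A"
      unfolding dual_values_def dual_feasible_def using sos_dual_form_iff[OF K A] by auto
  next
    fix V assume "V \<in> dual_values K n d A"
    then obtain \<beta> where "0 \<le> V" "dual_feasible K n d A V \<beta>" unfolding dual_values_def by blast
    then show "V \<in> ?L"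
      unfolding form unfolding subsetsK_1 prod.reindex[OF inj] dual_feasible_def sos_dual_form_iff[OF K A]
      by (intro CollectI exI[of _ V] exI[of _ "\<lambda>I. \<beta> (the_elem I)"]) auto
  qed
  then show ?thesis unfolding OptSOS_def by simp
qed

text \<open>Raising an order-1 certificate to the \<open>d\<close>-th power:
  \<open>P\<^sup>d - \<Prod> y\<^sub>i = (P\<^sup>d - S\<^sup>d) + (S\<^sup>d - \<Prod> y\<^sub>i)\<close> with \<open>P = V \<parallel>x\<parallel>\<^sup>2\<close>, \<open>y\<^sub>i = \<alpha>\<^sub>i \<langle>x, A\<^sub>i x\<rangle>\<close>,
  \<open>S = (\<Sum> y\<^sub>i) / d\<close>; the first bracket is a multiple of the certificate \<open>P - S\<close>, the second is AM-GM.\<close>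

lemma sos_power_certificate:
  assumes K: "real_or_complex K" and d: "1 \<le> d" and A: "\<forall>i<d. psd K n (A i)" and V: "0 \<le> V"
    and \<alpha>: "\<forall>i<d. 0 < \<alpha> i" and cert: "sos K n (dual_form n d A V \<alpha>)"
  shows "sos K n (\<lambda>x. V^d * vnorm2 n x ^ d - (\<Prod>i<d. \<alpha> i) * (\<Prod>i<d. Re (qform n (A i) x)))"
proof -
  define y where "y i x = \<alpha> i * Re (qform n (A i) x)" for i x
  have y: "sos K n (y i)" if "i < d" for i
    unfolding y_def using \<alpha> that psd_sos[OF K] A by (intro sos_scale) auto
  define S where "S x = (1 / real d) * (\<Sum>i<d. y i x)" for x
  have "sos K n (\<lambda>x. (V * vnorm2 n x) ^ d - S x ^ d)"
  proof (rule sos_power_diff)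
    show "sos K n (\<lambda>x. V * vnorm2 n x)" by (intro sos_scale[OF V] sos_vnorm2)
    show "sos K n S" unfolding S_def by (intro sos_scale sos_sum y) auto
    show "sos K n (\<lambda>x. V * vnorm2 n x - S x)" using cert unfolding S_def y_def dual_form_def by simp
  qed
  moreover have "sos K n (\<lambda>x. (1 / real d ^ d) * ((\<Sum>i<d. y i x)^d - real d^d * (\<Prod>i<d. y i x)))"
    by (intro sos_scale sos_amgm y) auto
  ultimately have "sos K n (\<lambda>x. ((V * vnorm2 n x) ^ d - S x ^ d)
      + (1 / real d ^ d) * ((\<Sum>i<d. y i x)^d - real d^d * (\<Prod>i<d. y i x)))"
    by (rule sos_add)
  moreover have "S x ^ d = (1 / real d ^ d) * (\<Sum>i<d. y i x)^d" for x
    unfolding S_def by (simp add: power_mult_distrib power_divide)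
  moreover have "(\<Prod>i<d. y i x) = (\<Prod>i<d. \<alpha> i) * (\<Prod>i<d. Re (qform n (A i) x))" for x
    unfolding y_def by (simp add: prod.distrib)
  ultimately show ?thesis using d by (simp add: power_mult_distrib right_diff_distrib)
qed

lemma OptSOS_self_le_dual_value:
  assumes K: "real_or_complex K" and d: "1 \<le> d" and A: "\<forall>i<d. psd K n (A i)"
    and V: "V \<in> dual_values K n d A"
  shows "OptSOS K n d A d \<le> V"
proof -
  obtain \<alpha> where V0: "0 \<le> V" and feas: "dual_feasible K n d A V \<alpha>"
    using V unfolding dual_values_def by blast
  have \<alpha>: "\<forall>i<d. 0 < \<alpha> i" "1 \<le> (\<Prod>i<d. \<alpha> i)" using feas unfolding dual_feasible_def by auto
  have "sos K n (dual_form n d A V \<alpha>)"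
    using feas sos_dual_form_iff[OF K A] unfolding dual_feasible_def by blast
  then have "sos K n (\<lambda>x. V^d * vnorm2 n x ^ d - (1 / real (d choose d)) *
      (\<Sum>I\<in>subsetsK d d. (\<lambda>_. \<Prod>i<d. \<alpha> i) I * (\<Prod>i\<in>I. Re (qform n (A i) x))))"
    unfolding subsetsK_self using sos_power_certificate[OF K d A V0 \<alpha>(1)] by simp
  moreover have "root d (V^d) = V" using d V0 by (simp add: real_root_power_cancel)
  ultimately have "V \<in> {root d lam | lam \<alpha>. lam \<ge> 0 \<and> (\<forall>I\<in>subsetsK d d. \<alpha> I > 0) \<and>
      (\<Prod>I\<in>subsetsK d d. \<alpha> I) \<ge> 1 \<and> sos K n (\<lambda>x. lam * vnorm2 n x ^ d - (1 / real (d choose d)) *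
      (\<Sum>I\<in>subsetsK d d. \<alpha> I * (\<Prod>i\<in>I. Re (qform n (A i) x))))}"
    using V0 \<alpha> unfolding subsetsK_self by (intro CollectI exI[of _ "V^d"] exI[of _ "\<lambda>_. \<Prod>i<d. \<alpha> i"]) auto
  then show ?thesis unfolding OptSOS_def
    by (rule cInf_lower) (auto intro!: bdd_belowI[of _ 0] real_root_ge_zero)
qed

theorem mainTheorem14:
  fixes K :: "complex set" and n d :: nat and A :: "nat \<Rightarrow> nat \<Rightarrow> nat \<Rightarrow> complex"
  assumes "K = \<real> \<or> K = UNIV"
    and "1 \<le> n" and "1 \<le> d"
    and "\<forall>i<d. psd K n (A i)"
  shows "OptSOS K n d A d \<le> OptSOS K n d A 1 \<and> OptSOS K n d A 1 = OptSDP K n d A"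
proof
  have dual: "Inf (dual_values K n d A) = OptSDP K n d A" by (rule Inf_dual_values[OF assms])
  show sos1: "OptSOS K n d A 1 = OptSDP K n d A"
    using OptSOS_1_eq_Inf_dual_values[OF assms(1,4)] dual by simp
  have "dual_values K n d A \<noteq> {}" using dual_values_approx[OF assms, of 1] by auto
  then have "OptSOS K n d A d \<le> Inf (dual_values K n d A)"
    by (rule cInf_greatest) (rule OptSOS_self_le_dual_value[OF assms(1,3,4)])
  then show "OptSOS K n d A d \<le> OptSOS K n d A 1" using sos1 dual by simp
qed

end
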